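(* Let $X$ be an FK-space containing $\phi$ and let $\overline{\phi}$ be the closure of $\phi$ in $X$. The following are equivalent: (i) $D_p^qW$ is closed in $X$; (ii) $\overline{\phi}\subseteq D_p^qB$; (iii) $\overline{\phi}\subseteq D_p^qF$; (iv) $\overline{\phi}=D_p^qW$; (v) $\overline{\phi}=D_p^qS$; (vi) $D_p^qS$ is closed in $X$.
   Context: An FK-space is a vector subspace of the space $w$ of all complex sequences with a complete metrizable locally convex topology in which coordinate functionals are continuous; $X'$ is its continuous dual. $\delta^j$ has $1$ in position $j$, $0$ elsewhere; $\phi=\operatorname{span}\{\delta^j\}$. $p(n)<q(n)$ are nonnegative integer sequences with $q(n)\to\infty$. For $x\in w$, $x^{(k)}=\sum_{j=1}^kx_j\delta^j$ and $T_n(x)=\frac{1}{q(n)-p(n)}\sum_{k=p(n)+1}^{q(n)}x^{(k)}$. Subspaces of $X$: $D_p^qS=\{x\in X: T_n(x)\to x\text{ in }X\}$; $D_p^qW=\{x\in X: f(T_n(x))\to f(x)\ \forall f\in X'\}$; $D_p^qF=\{x\in X:\lim_n f(T_n(x))\text{ exists }\forall f\in X'\}$; $D_p^qB=\{x\in X:\sup_n|f(T_n(x))|<\infty\ \forall f\in X'\}$. *)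

theory Defs
  imports "HOL-Analysis.Analysis"
begin

type_synonym cseq = "nat \<Rightarrow> complex"

text \<open>Coordinates are indexed from 0 (x 0 is the paper's x_1).\<close>

definition seq_add :: "cseq \<Rightarrow> cseq \<Rightarrow> cseq" where
  "seq_add x y = (\<lambda>j. x j + y j)"

definition seq_diff :: "cseq \<Rightarrow> cseq \<Rightarrow> cseq" where
  "seq_diff x y = (\<lambda>j. x j - y j)"

definition seq_scale :: "complex \<Rightarrow> cseq \<Rightarrow> cseq" where
  "seq_scale c x = (\<lambda>j. c * x j)"

definition seq_zero :: cseq where
  "seq_zero = (\<lambda>j. 0)"

definition cvec_subspace :: "cseq set \<Rightarrow> bool" where
  "cvec_subspace X \<longleftrightarrow> seq_zero \<in> X \<and>
     (\<forall>x\<in>X. \<forall>y\<in>X. seq_add x y \<in> X) \<and> (\<forall>c. \<forall>x\<in>X. seq_scale c x \<in> X)"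

definition seq_convex :: "cseq set \<Rightarrow> bool" where
  "seq_convex V \<longleftrightarrow> (\<forall>a\<in>V. \<forall>b\<in>V. \<forall>t::real. 0 \<le> t \<and> t \<le> 1 \<longrightarrow>
      seq_add (seq_scale (complex_of_real t) a) (seq_scale (complex_of_real (1 - t)) b) \<in> V)"

definition fk_space :: "cseq set \<Rightarrow> cseq topology \<Rightarrow> bool" where
  "fk_space X T \<longleftrightarrow>
     cvec_subspace X \<and> topspace T = X \<and>
     continuous_map (prod_topology T T) T (\<lambda>(x, y). seq_add x y) \<and>
     continuous_map (prod_topology euclidean T) T (\<lambda>(c, x). seq_scale c x) \<and>
     (\<forall>x U. openin T U \<and> x \<in> U \<longrightarrow> (\<exists>V. openin T V \<and> x \<in> V \<and> V \<subseteq> U \<and> seq_convex V)) \<and>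
     metrizable_space T \<and>
     (\<forall>s. (\<forall>n. s n \<in> X) \<and>
          (\<forall>U. openin T U \<and> seq_zero \<in> U \<longrightarrow>
              (\<exists>N. \<forall>m n. N \<le> m \<and> N \<le> n \<longrightarrow> seq_diff (s m) (s n) \<in> U))
        \<longrightarrow> (\<exists>l\<in>X. limitin T s l sequentially)) \<and>
     (\<forall>j. continuous_map T euclidean (\<lambda>x. x j))"

definition cdual :: "cseq set \<Rightarrow> cseq topology \<Rightarrow> (cseq \<Rightarrow> complex) set" where
  "cdual X T = {f. (\<forall>x\<in>X. \<forall>y\<in>X. f (seq_add x y) = f x + f y) \<and>
                  (\<forall>c. \<forall>x\<in>X. f (seq_scale c x) = c * f x) \<and>
                  continuous_map T euclidean f}"

definition delta :: "nat \<Rightarrow> cseq" where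
  "delta j = (\<lambda>i. if i = j then 1 else 0)"

definition phi :: "cseq set" where
  "phi = {x. \<exists>F c. finite F \<and> x = (\<lambda>i. \<Sum>j\<in>F. c j * delta j i)}"

definition sect :: "nat \<Rightarrow> cseq \<Rightarrow> cseq" where
  "sect k x = (\<lambda>i. \<Sum>j<k. x j * delta j i)"

definition Tmean :: "(nat \<Rightarrow> nat) \<Rightarrow> (nat \<Rightarrow> nat) \<Rightarrow> nat \<Rightarrow> cseq \<Rightarrow> cseq" where
  "Tmean p q n x = (\<lambda>i. (\<Sum>k\<in>{p n<..q n}. sect k x i) / of_nat (q n - p n))"

definition DS :: "(nat \<Rightarrow> nat) \<Rightarrow> (nat \<Rightarrow> nat) \<Rightarrow> cseq set \<Rightarrow> cseq topology \<Rightarrow> cseq set" where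
  "DS p q X T = {x\<in>X. limitin T (\<lambda>n. Tmean p q n x) x sequentially}"

definition DW :: "(nat \<Rightarrow> nat) \<Rightarrow> (nat \<Rightarrow> nat) \<Rightarrow> cseq set \<Rightarrow> cseq topology \<Rightarrow> cseq set" where
  "DW p q X T = {x\<in>X. \<forall>f\<in>cdual X T. (\<lambda>n. f (Tmean p q n x)) \<longlonglongrightarrow> f x}"

definition DF :: "(nat \<Rightarrow> nat) \<Rightarrow> (nat \<Rightarrow> nat) \<Rightarrow> cseq set \<Rightarrow> cseq topology \<Rightarrow> cseq set" where
  "DF p q X T = {x\<in>X. \<forall>f\<in>cdual X T. convergent (\<lambda>n. f (Tmean p q n x))}"

definition DB :: "(nat \<Rightarrow> nat) \<Rightarrow> (nat \<Rightarrow> nat) \<Rightarrow> cseq set \<Rightarrow> cseq topology \<Rightarrow> cseq set" where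
  "DB p q X T = {x\<in>X. \<forall>f\<in>cdual X T. (\<exists>M. \<forall>n. norm (f (Tmean p q n x)) \<le> M)}"

end

theory Submission
  imports Defs "HOL-Library.Function_Algebras"
begin

lemma seq_add_eq [simp]: "seq_add x y = x + y"
  by (simp add: seq_add_def fun_eq_iff)

lemma seq_diff_eq [simp]: "seq_diff x y = x - y"
  by (simp add: seq_diff_def fun_eq_iff)

lemma seq_zero_eq [simp]: "seq_zero = 0"
  by (simp add: seq_zero_def fun_eq_iff)

lemma seq_scale_apply: "seq_scale c x i = c * x i"
  by (simp add: seq_scale_def)

lemma seq_scale_scale [simp]: "seq_scale a (seq_scale b x) = seq_scale (a * b) x"
  and seq_scale_one [simp]: "seq_scale 1 x = x"
  and seq_scale_zero_left [simp]: "seq_scale 0 x = 0"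
  and seq_scale_zero_right [simp]: "seq_scale c 0 = 0"
  and seq_scale_minus_one [simp]: "seq_scale (-1) x = - x"
  by (simp_all add: seq_scale_def fun_eq_iff)

lemma seq_scale_add_right: "seq_scale c (x + y) = seq_scale c x + seq_scale c y"
  and seq_scale_diff_right: "seq_scale c (x - y) = seq_scale c x - seq_scale c y"
  and seq_scale_add_left: "seq_scale (a + b) x = seq_scale a x + seq_scale b x"
  and seq_scale_diff_left: "seq_scale (a - b) x = seq_scale a x - seq_scale b x"
  by (simp_all add: seq_scale_def fun_eq_iff algebra_simps)

abbreviation seq_rscale :: "real \<Rightarrow> cseq \<Rightarrow> cseq" where
  "seq_rscale t x \<equiv> seq_scale (complex_of_real t) x"

lemma
  assumes "cvec_subspace X"
  shows cvec_subspace_zero: "0 \<in> X"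
    and cvec_subspace_add: "x \<in> X \<Longrightarrow> y \<in> X \<Longrightarrow> x + y \<in> X"
    and cvec_subspace_scale: "x \<in> X \<Longrightarrow> seq_scale c x \<in> X"
    and cvec_subspace_uminus: "x \<in> X \<Longrightarrow> - x \<in> X"
    and cvec_subspace_diff: "x \<in> X \<Longrightarrow> y \<in> X \<Longrightarrow> x - y \<in> X"
  using assms seq_scale_minus_one[of x] unfolding cvec_subspace_def
  by (auto simp flip: seq_scale_minus_one) (metis diff_conv_add_uminus seq_scale_minus_one)

lemma cvec_subspace_sum:
  "cvec_subspace X \<Longrightarrow> (\<And>i. i \<in> F \<Longrightarrow> f i \<in> X) \<Longrightarrow> sum f F \<in> X"
  by (induction F rule: infinite_finite_induct) (auto intro: cvec_subspace_zero cvec_subspace_add)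

definition seminorm_on :: "cseq set \<Rightarrow> (cseq \<Rightarrow> real) \<Rightarrow> bool" where
  "seminorm_on X p \<longleftrightarrow> (\<forall>x\<in>X. \<forall>y\<in>X. p (x + y) \<le> p x + p y) \<and>
     (\<forall>c. \<forall>x\<in>X. p (seq_scale c x) = cmod c * p x)"

lemma
  assumes "seminorm_on X p"
  shows seminorm_on_add: "x \<in> X \<Longrightarrow> y \<in> X \<Longrightarrow> p (x + y) \<le> p x + p y"
    and seminorm_on_scale: "x \<in> X \<Longrightarrow> p (seq_scale c x) = cmod c * p x"
  using assms by (simp_all add: seminorm_on_def)

context
  fixes X p
  assumes X: "cvec_subspace X" and p: "seminorm_on X p"
begin

lemma seminorm_on_zero: "p 0 = 0"
  using seminorm_on_scale[OF p cvec_subspace_zero[OF X], of 0] by simp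

lemma seminorm_on_uminus: "x \<in> X \<Longrightarrow> p (- x) = p x"
  using seminorm_on_scale[OF p, of x "-1"] by simp

lemma seminorm_on_nonneg: "x \<in> X \<Longrightarrow> 0 \<le> p x"
  using seminorm_on_add[OF p, of x "- x"] seminorm_on_uminus[of x] seminorm_on_zero
  by (simp add: cvec_subspace_uminus[OF X])

lemma seminorm_on_diff_commute: "x \<in> X \<Longrightarrow> y \<in> X \<Longrightarrow> p (x - y) = p (y - x)"
  using seminorm_on_uminus[of "y - x"] by (simp add: cvec_subspace_diff[OF X])

lemma seminorm_on_triangle_diff:
  "x \<in> X \<Longrightarrow> y \<in> X \<Longrightarrow> z \<in> X \<Longrightarrow> p (x - z) \<le> p (x - y) + p (y - z)"
  using seminorm_on_add[OF p, of "x - y" "y - z"] by (simp add: cvec_subspace_diff[OF X])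

lemma seminorm_on_diff_le: "x \<in> X \<Longrightarrow> y \<in> X \<Longrightarrow> p (x - y) \<le> p x + p y"
  using seminorm_on_add[OF p, of x "- y"] seminorm_on_uminus[of y]
  by (simp add: cvec_subspace_uminus[OF X])

lemma seminorm_on_sum:
  "(\<And>i. i \<in> F \<Longrightarrow> f i \<in> X) \<Longrightarrow> p (sum f F) \<le> (\<Sum>i\<in>F. p (f i))"
proof (induction F rule: infinite_finite_induct)
  case (insert a F)
  have "p (sum f (insert a F)) \<le> p (f a) + p (sum f F)"
    unfolding sum.insert[OF insert(1,2)] using insert(4)
    by (intro seminorm_on_add[OF p]) (auto intro: cvec_subspace_sum[OF X])
  also have "\<dots> \<le> (\<Sum>i\<in>insert a F. p (f i))" using insert by simp
  finally show ?case .
qed (simp_all add: seminorm_on_zero)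

end

lemma seminorm_on_cmult:
  "seminorm_on X p \<Longrightarrow> 0 \<le> C \<Longrightarrow> seminorm_on X (\<lambda>x. C * p x)"
  by (simp add: seminorm_on_def distrib_left[symmetric] mult_left_mono)

definition clinear_on :: "cseq set \<Rightarrow> (cseq \<Rightarrow> complex) \<Rightarrow> bool" where
  "clinear_on X f \<longleftrightarrow> (\<forall>x\<in>X. \<forall>y\<in>X. f (x + y) = f x + f y) \<and>
     (\<forall>c. \<forall>x\<in>X. f (seq_scale c x) = c * f x)"

lemma
  assumes "clinear_on X f"
  shows clinear_on_add: "x \<in> X \<Longrightarrow> y \<in> X \<Longrightarrow> f (x + y) = f x + f y"
    and clinear_on_scale: "x \<in> X \<Longrightarrow> f (seq_scale c x) = c * f x"
  using assms by (simp_all add: clinear_on_def)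

lemma cdual_iff: "f \<in> cdual X T \<longleftrightarrow> clinear_on X f \<and> continuous_map T euclidean f"
  by (simp add: cdual_def clinear_on_def)

definition minkowski :: "cseq set \<Rightarrow> cseq \<Rightarrow> real" where
  "minkowski A x = Inf {t. 0 < t \<and> (\<exists>a\<in>A. x = seq_rscale t a)}"

locale absorbing_disk =
  fixes X A :: "cseq set"
  assumes subspace: "cvec_subspace X"
    and balanced: "\<And>c a. cmod c \<le> 1 \<Longrightarrow> a \<in> A \<Longrightarrow> seq_scale c a \<in> A"
    and convex: "seq_convex A"
    and absorbing: "\<And>x. x \<in> X \<Longrightarrow> \<exists>t>0. \<exists>a\<in>A. x = seq_rscale t a"
begin

lemma zero_mem: "0 \<in> A"
  using absorbing[OF cvec_subspace_zero[OF subspace]] balanced[of 0] by auto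

lemma minkowski_le: "0 < t \<Longrightarrow> a \<in> A \<Longrightarrow> minkowski A (seq_rscale t a) \<le> t"
  unfolding minkowski_def by (rule cInf_lower) (auto intro: bdd_belowI[of _ 0])

lemma minkowski_nonneg: "x \<in> X \<Longrightarrow> 0 \<le> minkowski A x"
  unfolding minkowski_def using absorbing by (intro cInf_greatest) auto

lemma minkowski_lessD:
  assumes x: "x \<in> X" and less: "minkowski A x < s"
  shows "\<exists>a\<in>A. x = seq_rscale s a"
proof -
  obtain t a where t: "0 < t" "t < s" "a \<in> A" "x = seq_rscale t a"
    using cInf_lessD[OF _ less[unfolded minkowski_def]] absorbing[OF x] by blast
  have "cmod (complex_of_real (t / s)) \<le> 1"
    using t by (subst norm_of_real) simp
  then have "seq_rscale (t / s) a \<in> A" using balanced t(3) by blast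
  moreover have "x = seq_rscale s (seq_rscale (t / s) a)" using t by simp
  ultimately show ?thesis by blast
qed

lemma minkowski_less_one: "x \<in> X \<Longrightarrow> minkowski A x < 1 \<Longrightarrow> x \<in> A"
  using minkowski_lessD[of x 1] by auto

lemma minkowski_add:
  assumes x: "x \<in> X" and y: "y \<in> X"
  shows "minkowski A (x + y) \<le> minkowski A x + minkowski A y"
proof (rule field_le_epsilon)
  fix e :: real assume e: "e > 0"
  define s where "s = minkowski A x + e / 2"
  define t where "t = minkowski A y + e / 2"
  have st: "s > 0" "t > 0" using minkowski_nonneg x y e by (auto simp: s_def t_def add_nonneg_pos)
  obtain a b where ab: "a \<in> A" "b \<in> A" "x = seq_rscale s a" "y = seq_rscale t b"
    using minkowski_lessD[OF x, of s] minkowski_lessD[OF y, of t] e by (auto simp: s_def t_def)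
  define l where "l = s / (s + t)"
  have "0 \<le> l" "l \<le> 1" using st by (auto simp: l_def)
  then have c: "seq_add (seq_rscale l a) (seq_rscale (1 - l) b) \<in> A"
    using convex ab unfolding seq_convex_def by blast
  have "(s + t) * l = s" "(s + t) * (1 - l) = t" using st by (simp_all add: l_def field_simps)
  then have "complex_of_real (s + t) * complex_of_real l = complex_of_real s"
    "complex_of_real (s + t) * complex_of_real (1 - l) = complex_of_real t"
    by (metis of_real_mult)+
  then have "x + y = seq_rscale (s + t) (seq_add (seq_rscale l a) (seq_rscale (1 - l) b))"
    by (simp only: ab seq_add_eq seq_scale_add_right seq_scale_scale)
  then have "minkowski A (x + y) \<le> s + t" using minkowski_le[OF _ c] st by (metis add_pos_pos)
  then show "minkowski A (x + y) \<le> minkowski A x + minkowski A y + e" by (simp add: s_def t_def)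
qed

lemma minkowski_scale_le:
  assumes x: "x \<in> X" and c: "c \<noteq> 0"
  shows "minkowski A (seq_scale c x) \<le> cmod c * minkowski A x"
proof -
  have "minkowski A (seq_scale c x) / cmod c \<le> s" if s: "minkowski A x < s" for s
  proof -
    obtain a where a: "a \<in> A" "x = seq_rscale s a" using minkowski_lessD[OF x s] by blast
    have "s > 0" using s minkowski_nonneg[OF x] by simp
    define u where "u = c / complex_of_real (cmod c)"
    have ua: "seq_scale u a \<in> A" using balanced a(1) c by (simp add: u_def norm_divide)
    have "seq_scale c x = seq_rscale (cmod c * s) (seq_scale u a)"
      using c by (simp add: a(2) u_def mult.commute)
    moreover have "minkowski A (seq_rscale (cmod c * s) (seq_scale u a)) \<le> cmod c * s"
      using c \<open>s > 0\<close> by (intro minkowski_le ua) simp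
    ultimately have "minkowski A (seq_scale c x) \<le> cmod c * s" by simp
    then show ?thesis using c by (simp add: field_simps)
  qed
  then have "minkowski A (seq_scale c x) / cmod c \<le> minkowski A x" by (rule dense_ge)
  then show ?thesis using c by (simp add: field_simps)
qed

lemma minkowski_zero: "minkowski A 0 = 0"
proof (rule antisym)
  show "minkowski A 0 \<le> 0"
    by (rule dense_ge) (use minkowski_le[OF _ zero_mem] in simp)
qed (rule minkowski_nonneg[OF cvec_subspace_zero[OF subspace]])

lemma seminorm_minkowski: "seminorm_on X (minkowski A)"
  unfolding seminorm_on_def
proof (intro conjI ballI allI minkowski_add)
  fix c x assume x: "x \<in> X"
  show "minkowski A (seq_scale c x) = cmod c * minkowski A x"
  proof (cases "c = 0")
    case False
    have "minkowski A x = minkowski A (seq_scale (inverse c) (seq_scale c x))" using False by simp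
    also have "\<dots> \<le> cmod (inverse c) * minkowski A (seq_scale c x)"
      using False by (intro minkowski_scale_le cvec_subspace_scale[OF subspace x]) simp
    finally have "minkowski A x \<le> cmod (inverse c) * minkowski A (seq_scale c x)" .
    then have "cmod c * minkowski A x \<le> cmod c * (cmod (inverse c) * minkowski A (seq_scale c x))"
      by (rule mult_left_mono) simp
    also have "\<dots> = minkowski A (seq_scale c x)" using False by (simp add: norm_inverse)
    finally have "cmod c * minkowski A x \<le> minkowski A (seq_scale c x)" .
    then show ?thesis using minkowski_scale_le[OF x False] by simp
  qed (simp add: minkowski_zero)
qed

end

definition sublinear_on :: "cseq set \<Rightarrow> (cseq \<Rightarrow> real) \<Rightarrow> bool" where
  "sublinear_on X p \<longleftrightarrow> (\<forall>x\<in>X. \<forall>y\<in>X. p (x + y) \<le> p x + p y) \<and>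
     (\<forall>t\<ge>0. \<forall>x\<in>X. p (seq_rscale t x) = t * p x)"

lemma
  assumes "sublinear_on X p"
  shows sublinear_on_add: "x \<in> X \<Longrightarrow> y \<in> X \<Longrightarrow> p (x + y) \<le> p x + p y"
    and sublinear_on_rscale: "x \<in> X \<Longrightarrow> 0 \<le> t \<Longrightarrow> p (seq_rscale t x) = t * p x"
  using assms by (simp_all add: sublinear_on_def)

lemma seminorm_on_imp_sublinear_on: "seminorm_on X p \<Longrightarrow> sublinear_on X p"
  by (simp add: seminorm_on_def sublinear_on_def)

definition dominated_linear_graph :: "cseq set \<Rightarrow> (cseq \<Rightarrow> real) \<Rightarrow> (cseq \<times> real) set \<Rightarrow> bool"
  where "dominated_linear_graph X p G \<longleftrightarrow>
     (\<forall>x a. (x, a) \<in> G \<longrightarrow> x \<in> X \<and> a \<le> p x) \<and>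
     (\<forall>x a b. (x, a) \<in> G \<longrightarrow> (x, b) \<in> G \<longrightarrow> a = b) \<and>
     (\<forall>x a y b. (x, a) \<in> G \<longrightarrow> (y, b) \<in> G \<longrightarrow> (x + y, a + b) \<in> G) \<and>
     (\<forall>x a t. (x, a) \<in> G \<longrightarrow> (seq_rscale t x, t * a) \<in> G)"

lemma
  assumes "dominated_linear_graph X p G"
  shows dominated_linear_graph_mem: "(x, a) \<in> G \<Longrightarrow> x \<in> X"
    and dominated_linear_graph_le: "(x, a) \<in> G \<Longrightarrow> a \<le> p x"
    and dominated_linear_graph_unique: "(x, a) \<in> G \<Longrightarrow> (x, b) \<in> G \<Longrightarrow> a = b"
    and dominated_linear_graph_add: "(x, a) \<in> G \<Longrightarrow> (y, b) \<in> G \<Longrightarrow> (x + y, a + b) \<in> G"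
    and dominated_linear_graph_rscale: "(x, a) \<in> G \<Longrightarrow> (seq_rscale t x, t * a) \<in> G"
  using assms unfolding dominated_linear_graph_def by blast+

lemma dominated_linear_graph_Union:
  assumes C: "C \<in> chains {G. dominated_linear_graph X p G}"
  shows "dominated_linear_graph X p (\<Union>C)"
proof -
  have G: "dominated_linear_graph X p G" if "G \<in> C" for G
    using chainsD2[OF C] that by blast
  have common: "\<exists>G\<in>C. P \<in> G \<and> Q \<in> G" if "P \<in> \<Union>C" "Q \<in> \<Union>C" for P Q
    using that chainsD[OF C] by blast
  show ?thesis
    unfolding dominated_linear_graph_def
  proof (intro conjI allI impI)
    fix x a assume "(x, a) \<in> \<Union>C"
    then show "x \<in> X" using G dominated_linear_graph_mem by blast
  next
    fix x a assume "(x, a) \<in> \<Union>C"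
    then show "a \<le> p x" using G dominated_linear_graph_le by blast
  next
    fix x a b assume "(x, a) \<in> \<Union>C" "(x, b) \<in> \<Union>C"
    then obtain H where "H \<in> C" "(x, a) \<in> H" "(x, b) \<in> H" using common by blast
    then show "a = b" using G dominated_linear_graph_unique by blast
  next
    fix x a y b assume "(x, a) \<in> \<Union>C" "(y, b) \<in> \<Union>C"
    then obtain H where "H \<in> C" "(x, a) \<in> H" "(y, b) \<in> H" using common by blast
    then show "(x + y, a + b) \<in> \<Union>C" using G dominated_linear_graph_add by blast
  next
    fix x a t assume "(x, a) \<in> \<Union>C"
    then show "(seq_rscale t x, t * a) \<in> \<Union>C" using G dominated_linear_graph_rscale by blast
  qed
qed

context
  fixes X p G x0
  assumes X: "cvec_subspace X" and p: "sublinear_on X p"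
    and G: "dominated_linear_graph X p G" and x0: "x0 \<in> X"
begin

lemma hahn_banach_extension_constant:
  assumes "G \<noteq> {}"
  obtains c where "\<And>u a. (u, a) \<in> G \<Longrightarrow> a - p (u - x0) \<le> c"
    and "\<And>v b. (v, b) \<in> G \<Longrightarrow> c \<le> p (v + x0) - b"
proof -
  define S where "S = {a - p (u - x0) | u a. (u, a) \<in> G}"
  have gap: "a - p (u - x0) \<le> p (v + x0) - b" if ua: "(u, a) \<in> G" and vb: "(v, b) \<in> G" for u a v b
  proof -
    have "u \<in> X" "v \<in> X" using ua vb G dominated_linear_graph_mem by blast+
    have "a + b \<le> p ((u - x0) + (v + x0))"
      using dominated_linear_graph_le[OF G dominated_linear_graph_add[OF G ua vb]] by simp
    also have "\<dots> \<le> p (u - x0) + p (v + x0)"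
      using \<open>u \<in> X\<close> \<open>v \<in> X\<close> x0 by (intro sublinear_on_add[OF p] cvec_subspace_diff[OF X] cvec_subspace_add[OF X])
    finally show ?thesis by simp
  qed
  have "S \<noteq> {}" using assms by (auto simp: S_def)
  moreover have "bdd_above S" using gap assms by (force simp: S_def bdd_above_def)
  ultimately show thesis
    using that[of "Sup S"] gap by (auto simp: S_def intro!: cSup_upper cSup_least)
qed

lemma hahn_banach_extension_bound:
  assumes c_lower: "\<And>u a. (u, a) \<in> G \<Longrightarrow> a - p (u - x0) \<le> c"
    and c_upper: "\<And>v b. (v, b) \<in> G \<Longrightarrow> c \<le> p (v + x0) - b"
    and yb: "(y, b) \<in> G"
  shows "b + t * c \<le> p (y + seq_rscale t x0)"
proof -
  have y: "y \<in> X" using G yb dominated_linear_graph_mem by blast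
  consider "t > 0" | "t < 0" | "t = 0" by linarith
  then show ?thesis
  proof cases
    case 1
    have "c \<le> p (seq_rscale (inverse t) y + x0) - inverse t * b"
      using c_upper dominated_linear_graph_rscale[OF G yb] by blast
    then have "t * c \<le> t * (p (seq_rscale (inverse t) y + x0) - inverse t * b)"
      using 1 by (intro mult_left_mono) auto
    also have "\<dots> = t * p (seq_rscale (inverse t) y + x0) - b"
      using 1 by (simp add: right_diff_distrib)
    also have "t * p (seq_rscale (inverse t) y + x0) = p (y + seq_rscale t x0)"
      using 1 y x0 sublinear_on_rscale[OF p, of "seq_rscale (inverse t) y + x0" t]
      by (simp add: seq_scale_add_right cvec_subspace_add[OF X] cvec_subspace_scale[OF X])
    finally show ?thesis by simp
  next
    case 2
    define s where "s = - t"
    have s: "s > 0" using 2 by (simp add: s_def)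
    have "inverse s * b - p (seq_rscale (inverse s) y - x0) \<le> c"
      using c_lower dominated_linear_graph_rscale[OF G yb] by blast
    then have "s * (inverse s * b - p (seq_rscale (inverse s) y - x0)) \<le> s * c"
      using s by (intro mult_left_mono) auto
    then have "b - s * p (seq_rscale (inverse s) y - x0) \<le> s * c"
      using s by (simp add: right_diff_distrib mult.assoc[symmetric])
    also have "s * p (seq_rscale (inverse s) y - x0) = p (seq_rscale s (seq_rscale (inverse s) y - x0))"
      using s y x0
      by (simp add: sublinear_on_rscale[OF p] cvec_subspace_diff[OF X] cvec_subspace_scale[OF X])
    also have "seq_rscale s (seq_rscale (inverse s) y - x0) = y + seq_rscale t x0"
      using s by (simp add: seq_scale_def fun_eq_iff s_def algebra_simps)
    finally have "b - p (y + seq_rscale t x0) \<le> s * c" .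
    then show ?thesis by (simp add: s_def)
  qed (use dominated_linear_graph_le[OF G yb] in simp)
qed

lemma dominated_linear_graph_extend:
  assumes "G \<noteq> {}" and x0_new: "\<And>a. (x0, a) \<notin> G"
  obtains c where "dominated_linear_graph X p {(y + seq_rscale t x0, b + t * c) | y b t. (y, b) \<in> G}"
proof -
  obtain c where c_lower: "\<And>u a. (u, a) \<in> G \<Longrightarrow> a - p (u - x0) \<le> c"
    and c_upper: "\<And>v b. (v, b) \<in> G \<Longrightarrow> c \<le> p (v + x0) - b"
    using hahn_banach_extension_constant[OF assms(1)] by blast
  define G' where "G' = {(y + seq_rscale t x0, b + t * c) | y b t. (y, b) \<in> G}"
  have "dominated_linear_graph X p G'"
    unfolding dominated_linear_graph_def
  proof (intro conjI allI impI)
    fix z a assume "(z, a) \<in> G'"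
    then obtain y b t where e: "z = y + seq_rscale t x0" "a = b + t * c" "(y, b) \<in> G"
      unfolding G'_def by blast
    then show "z \<in> X"
      using G dominated_linear_graph_mem x0 cvec_subspace_add[OF X] cvec_subspace_scale[OF X] by blast
    show "a \<le> p z" using hahn_banach_extension_bound[OF c_lower c_upper e(3)] e by simp
  next
    fix z a a' assume "(z, a) \<in> G'" "(z, a') \<in> G'"
    then obtain y b t y' b' t' where e: "z = y + seq_rscale t x0" "a = b + t * c" "(y, b) \<in> G"
      "z = y' + seq_rscale t' x0" "a' = b' + t' * c" "(y', b') \<in> G"
      unfolding G'_def by blast
    have "t = t'"
    proof (rule ccontr)
      assume ne: "t \<noteq> t'"
      have "(y' + seq_rscale (-1) y, b' + (-1) * b) \<in> G"
        using G e(3,6) dominated_linear_graph_add dominated_linear_graph_rscale by blast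
      then have "(seq_rscale (inverse (t - t')) (y' - y), inverse (t - t') * (b' - b)) \<in> G"
        using G dominated_linear_graph_rscale by fastforce
      moreover have "y' - y = seq_rscale (t - t') x0"
        using e(1,4) by (simp add: seq_scale_diff_left algebra_simps)
      ultimately show False using ne x0_new by simp
    qed
    then show "a = a'"
      using e G dominated_linear_graph_unique by simp
  next
    fix z a w d assume "(z, a) \<in> G'" "(w, d) \<in> G'"
    then obtain y b t y' b' t' where e: "z = y + seq_rscale t x0" "a = b + t * c" "(y, b) \<in> G"
      "w = y' + seq_rscale t' x0" "d = b' + t' * c" "(y', b') \<in> G"
      unfolding G'_def by blast
    have "(y + y', b + b') \<in> G" using G e dominated_linear_graph_add by blast
    moreover have "z + w = (y + y') + seq_rscale (t + t') x0" "a + d = (b + b') + (t + t') * c"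
      using e by (simp_all add: seq_scale_add_left algebra_simps)
    ultimately show "(z + w, a + d) \<in> G'" unfolding G'_def by blast
  next
    fix z a s assume "(z, a) \<in> G'"
    then obtain y b t where e: "z = y + seq_rscale t x0" "a = b + t * c" "(y, b) \<in> G"
      unfolding G'_def by blast
    have "(seq_rscale s y, s * b) \<in> G" using G e dominated_linear_graph_rscale by blast
    moreover have "seq_rscale s z = seq_rscale s y + seq_rscale (s * t) x0" "s * a = s * b + (s * t) * c"
      using e by (simp_all add: seq_scale_add_right algebra_simps)
    ultimately show "(seq_rscale s z, s * a) \<in> G'" unfolding G'_def by blast
  qed
  then show thesis using that G'_def by blast
qed

end

lemma exists_maximal_dominated_linear_graph:
  assumes G0: "dominated_linear_graph X p G0"
  obtains G where "dominated_linear_graph X p G" "G0 \<subseteq> G"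
    "\<And>G'. dominated_linear_graph X p G' \<Longrightarrow> G \<subseteq> G' \<Longrightarrow> G' = G"
proof -
  define \<G> where "\<G> = {G. dominated_linear_graph X p G \<and> G0 \<subseteq> G}"
  have "\<exists>G\<in>\<G>. \<forall>G'\<in>\<G>. G \<subseteq> G' \<longrightarrow> G' = G"
  proof (rule Zorn_Lemma2, intro ballI)
    fix C assume C: "C \<in> chains \<G>"
    show "\<exists>U\<in>\<G>. \<forall>G\<in>C. G \<subseteq> U"
    proof (cases "C = {}")
      case False
      have "C \<in> chains {G. dominated_linear_graph X p G}"
        using C by (auto simp: chains_def \<G>_def)
      then have "\<Union>C \<in> \<G>"
        using dominated_linear_graph_Union chainsD2[OF C] False by (fastforce simp: \<G>_def)
      then show ?thesis by blast
    qed (use G0 in \<open>auto simp: \<G>_def\<close>)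
  qed
  then obtain G where "G \<in> \<G>" "\<And>G'. G' \<in> \<G> \<Longrightarrow> G \<subseteq> G' \<Longrightarrow> G' = G" by blast
  then show thesis using that unfolding \<G>_def by blast
qed

theorem hahn_banach_real:
  assumes X: "cvec_subspace X" and p: "sublinear_on X p"
    and M: "M \<subseteq> X" "0 \<in> M" "\<And>x y. x \<in> M \<Longrightarrow> y \<in> M \<Longrightarrow> x + y \<in> M"
      "\<And>t x. x \<in> M \<Longrightarrow> seq_rscale t x \<in> M"
    and h_add: "\<And>x y. x \<in> M \<Longrightarrow> y \<in> M \<Longrightarrow> h (x + y) = h x + h y"
    and h_rscale: "\<And>t x. x \<in> M \<Longrightarrow> h (seq_rscale t x) = t * h x"
    and h_le: "\<And>x. x \<in> M \<Longrightarrow> h x \<le> p x"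
  obtains H where "\<And>x y. x \<in> X \<Longrightarrow> y \<in> X \<Longrightarrow> H (x + y) = H x + H y"
    and "\<And>t x. x \<in> X \<Longrightarrow> H (seq_rscale t x) = t * H x"
    and "\<And>x. x \<in> M \<Longrightarrow> H x = h x" and "\<And>x. x \<in> X \<Longrightarrow> H x \<le> p x"
proof -
  have G0: "dominated_linear_graph X p {(x, h x) | x. x \<in> M}"
    using M h_add h_rscale h_le by (auto simp: dominated_linear_graph_def)
  obtain G where G: "dominated_linear_graph X p G" "{(x, h x) | x. x \<in> M} \<subseteq> G"
    and maximal: "\<And>G'. dominated_linear_graph X p G' \<Longrightarrow> G \<subseteq> G' \<Longrightarrow> G' = G"
    using exists_maximal_dominated_linear_graph[OF G0] by blast
  have graph_h: "(x, h x) \<in> G" if "x \<in> M" for x using G(2) that by blast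
  have total: "\<exists>a. (x, a) \<in> G" if x: "x \<in> X" for x
  proof (rule ccontr)
    assume new: "\<nexists>a. (x, a) \<in> G"
    have "G \<noteq> {}" using graph_h[OF M(2)] by blast
    then obtain c where
      G': "dominated_linear_graph X p {(y + seq_rscale t x, b + t * c) | y b t. (y, b) \<in> G}"
        (is "dominated_linear_graph X p ?G'")
      using dominated_linear_graph_extend[OF X p G(1) x] new by blast
    have "(y, b) \<in> ?G'" if "(y, b) \<in> G" for y b
      using that by (intro CollectI exI[of _ y] exI[of _ b] exI[of _ 0]) simp
    then have "G \<subseteq> ?G'" by auto
    then have "?G' = G" by (rule maximal[OF G'])
    moreover have "(x, c) \<in> ?G'"
      using graph_h[OF M(2)] h_rscale[OF M(2), of 0]
      by (intro CollectI exI[of _ 0] exI[of _ "h 0"] exI[of _ 1]) simp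
    ultimately show False using new by blast
  qed
  define H where "H x = (THE a. (x, a) \<in> G)" for x
  have H_eq: "H x = a" if "(x, a) \<in> G" for x a
    unfolding H_def using that G(1) dominated_linear_graph_unique by blast
  have H_graph: "(x, H x) \<in> G" if "x \<in> X" for x
    using total[OF that] H_eq by blast
  show thesis
  proof (rule that)
    show "H (x + y) = H x + H y" if "x \<in> X" "y \<in> X" for x y
      using that H_eq H_graph G(1) dominated_linear_graph_add by blast
    show "H (seq_rscale t x) = t * H x" if "x \<in> X" for t x
      using that H_eq H_graph G(1) dominated_linear_graph_rscale by blast
    show "H x = h x" if "x \<in> M" for x
      using that H_eq graph_h by blast
    show "H x \<le> p x" if "x \<in> X" for x
      using that H_graph G(1) dominated_linear_graph_le by blast
  qed
qed

lemma clinear_on_complexification: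
  assumes H_add: "\<And>x y. x \<in> X \<Longrightarrow> y \<in> X \<Longrightarrow> H (x + y) = H x + H y"
    and H_rscale: "\<And>t x. x \<in> X \<Longrightarrow> H (seq_rscale t x) = t * H x"
    and X: "cvec_subspace X"
  shows "clinear_on X (\<lambda>x. complex_of_real (H x) - \<i> * complex_of_real (H (seq_scale \<i> x)))"
proof -
  have H_scale: "H (seq_scale c x) = Re c * H x + Im c * H (seq_scale \<i> x)" if x: "x \<in> X" for c x
  proof -
    have "seq_scale c x = seq_rscale (Re c) x + seq_rscale (Im c) (seq_scale \<i> x)"
      by (rule ext) (simp add: seq_scale_def complex_eq_iff)
    then have "H (seq_scale c x) = H (seq_rscale (Re c) x) + H (seq_rscale (Im c) (seq_scale \<i> x))"
      using x H_add cvec_subspace_scale[OF X] by metis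
    then show ?thesis
      by (simp only: H_rscale[OF x] H_rscale[OF cvec_subspace_scale[OF X x]])
  qed
  show ?thesis
    unfolding clinear_on_def
  proof (intro conjI ballI allI)
    fix x y assume "x \<in> X" "y \<in> X"
    then show "complex_of_real (H (x + y)) - \<i> * complex_of_real (H (seq_scale \<i> (x + y))) =
      complex_of_real (H x) - \<i> * complex_of_real (H (seq_scale \<i> x)) +
      (complex_of_real (H y) - \<i> * complex_of_real (H (seq_scale \<i> y)))"
      using H_add cvec_subspace_scale[OF X] by (simp add: seq_scale_add_right algebra_simps)
  next
    fix c x assume x: "x \<in> X"
    have "H (seq_scale \<i> (seq_scale c x)) = - Im c * H x + Re c * H (seq_scale \<i> x)"
      using H_scale[OF x, of "\<i> * c"] by simp
    then show "complex_of_real (H (seq_scale c x)) - \<i> * complex_of_real (H (seq_scale \<i> (seq_scale c x))) =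
      c * (complex_of_real (H x) - \<i> * complex_of_real (H (seq_scale \<i> x)))"
      unfolding H_scale[OF x, of c] by (simp add: complex_eq_iff algebra_simps)
  qed
qed

theorem hahn_banach_complex:
  assumes X: "cvec_subspace X" and p: "seminorm_on X p"
    and M: "cvec_subspace M" "M \<subseteq> X" and g: "clinear_on M g"
    and g_le: "\<And>x. x \<in> M \<Longrightarrow> cmod (g x) \<le> p x"
  obtains F where "clinear_on X F" "\<And>x. x \<in> M \<Longrightarrow> F x = g x" "\<And>x. x \<in> X \<Longrightarrow> cmod (F x) \<le> p x"
proof -
  have Re_g_add: "Re (g (x + y)) = Re (g x) + Re (g y)" if "x \<in> M" "y \<in> M" for x y
    using clinear_on_add[OF g that] by simp
  have Re_g_rscale: "Re (g (seq_rscale t x)) = t * Re (g x)" if "x \<in> M" for t x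
    using clinear_on_scale[OF g that] by simp
  have Re_g_le: "Re (g x) \<le> p x" if "x \<in> M" for x
    using g_le[OF that] complex_Re_le_cmod[of "g x"] by linarith
  obtain H where H_add: "\<And>x y. x \<in> X \<Longrightarrow> y \<in> X \<Longrightarrow> H (x + y) = H x + H y"
    and H_rscale: "\<And>t x. x \<in> X \<Longrightarrow> H (seq_rscale t x) = t * H x"
    and H_M: "\<And>x. x \<in> M \<Longrightarrow> H x = Re (g x)" and H_le: "\<And>x. x \<in> X \<Longrightarrow> H x \<le> p x"
    using hahn_banach_real[OF X seminorm_on_imp_sublinear_on[OF p] M(2) cvec_subspace_zero[OF M(1)]
        cvec_subspace_add[OF M(1)] cvec_subspace_scale[OF M(1)] Re_g_add Re_g_rscale Re_g_le]
    by blast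
  define F where "F x = complex_of_real (H x) - \<i> * complex_of_real (H (seq_scale \<i> x))" for x
  have F: "clinear_on X F"
    unfolding F_def by (rule clinear_on_complexification[OF H_add H_rscale X])
  show thesis
  proof (rule that[OF F])
    fix x assume x: "x \<in> M"
    have "H (seq_scale \<i> x) = - Im (g x)"
      using H_M cvec_subspace_scale[OF M(1) x] clinear_on_scale[OF g x, of \<i>] by simp
    then show "F x = g x" using H_M[OF x] by (simp add: F_def complex_eq_iff)
  next
    fix x assume x: "x \<in> X"
    show "cmod (F x) \<le> p x"
    proof (cases "F x = 0")
      case True then show ?thesis using seminorm_on_nonneg[OF X p x] by simp
    next
      case False
      define u where "u = cnj (F x) / complex_of_real (cmod (F x))"
      have "F (seq_scale u x) = complex_of_real (cmod (F x))"
        using False clinear_on_scale[OF F x, of u]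
        by (simp add: u_def complex_norm_square[symmetric] power2_eq_square field_simps mult.commute)
      then have "cmod (F x) = H (seq_scale u x)" by (simp add: F_def complex_eq_iff)
      also have "\<dots> \<le> p (seq_scale u x)" using H_le cvec_subspace_scale[OF X x] by blast
      also have "\<dots> = p x" using seminorm_on_scale[OF p x] False by (simp add: u_def norm_divide)
      finally show ?thesis .
    qed
  qed
qed

locale FK_space =
  fixes X :: "cseq set" and T :: "cseq topology"
  assumes fk_space: "fk_space X T"
begin

lemma subspace: "cvec_subspace X"
  and topspace_eq [simp]: "topspace T = X"
  and continuous_map_add: "continuous_map (prod_topology T T) T (\<lambda>(x, y). x + y)"
  and continuous_map_scale: "continuous_map (prod_topology euclidean T) T (\<lambda>(c, x). seq_scale c x)"
  and locally_convex: "openin T U \<Longrightarrow> x \<in> U \<Longrightarrow> \<exists>V. openin T V \<and> x \<in> V \<and> V \<subseteq> U \<and> seq_convex V"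
  and metrizable: "metrizable_space T"
  and continuous_map_coordinate: "continuous_map T euclidean (\<lambda>x. x j)"
  using fk_space by (simp_all add: fk_space_def)

lemma Cauchy_imp_limitin:
  assumes "\<And>n. s n \<in> X"
    and "\<And>U. openin T U \<Longrightarrow> 0 \<in> U \<Longrightarrow> \<exists>N. \<forall>m n. N \<le> m \<and> N \<le> n \<longrightarrow> s m - s n \<in> U"
  shows "\<exists>l\<in>X. limitin T s l sequentially"
  using fk_space assms unfolding fk_space_def by (metis seq_diff_eq seq_zero_eq)

lemma continuous_map_translate: "a \<in> X \<Longrightarrow> continuous_map T T (\<lambda>z. z + a)"
  using continuous_map_compose[OF _ continuous_map_add, of T "\<lambda>z. (z, a)"]
  by (simp add: continuous_map_pairwise o_def)

lemma continuous_map_scale_right: "continuous_map T T (seq_scale c)"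
  using continuous_map_compose[OF _ continuous_map_scale, of T "\<lambda>z. (c, z)"]
  by (simp add: continuous_map_pairwise o_def)

lemma continuous_map_scale_left: "x \<in> X \<Longrightarrow> continuous_map euclidean T (\<lambda>c. seq_scale c x)"
  using continuous_map_compose[OF _ continuous_map_scale, of euclidean "\<lambda>c. (c, x)"]
  by (simp add: continuous_map_pairwise o_def)

lemma openin_translate: "openin T U \<Longrightarrow> a \<in> X \<Longrightarrow> openin T {z\<in>X. z + a \<in> U}"
  using openin_continuous_map_preimage[OF continuous_map_translate] by simp

lemma openin_scale: "openin T U \<Longrightarrow> openin T {z\<in>X. seq_scale c z \<in> U}"
  using openin_continuous_map_preimage[OF continuous_map_scale_right] by simp

lemma open_scalars: "openin T U \<Longrightarrow> x \<in> X \<Longrightarrow> open {c. seq_scale c x \<in> U}"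
  using openin_continuous_map_preimage[OF continuous_map_scale_left] by simp

lemma nhds_zero_absorbing:
  assumes "openin T U" "0 \<in> U" "x \<in> X"
  obtains t where "t > 0" "seq_rscale t x \<in> U"
proof -
  have "0 \<in> {c. seq_scale c x \<in> U}" using assms(2) by simp
  then obtain d where d: "d > 0" "ball 0 d \<subseteq> {c. seq_scale c x \<in> U}"
    using open_contains_ball_eq[OF open_scalars[OF assms(1,3)]] by blast
  have "complex_of_real (d / 2) \<in> ball 0 d" using d by simp
  then have "seq_rscale (d / 2) x \<in> U" using d(2) by blast
  then show thesis using d(1) by (intro that[of "d / 2"]) simp_all
qed

lemma countable_nhds_base_zero:
  obtains B :: "nat \<Rightarrow> cseq set" where "\<And>k. openin T (B k)" "\<And>k. 0 \<in> B k"
    "\<And>U. openin T U \<Longrightarrow> 0 \<in> U \<Longrightarrow> \<exists>k. B k \<subseteq> U"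
proof -
  have X0: "0 \<in> X" by (rule cvec_subspace_zero[OF subspace])
  obtain M d where "Metric_space M d" and T: "T = Metric_space.mtopology M d"
    using metrizable by (auto simp: metrizable_space_def)
  interpret Metric_space M d by fact
  have M: "M = X" using topspace_eq T by simp
  show thesis
  proof
    show "openin T (mball 0 (inverse (Suc k)))" "0 \<in> mball 0 (inverse (Suc k))" for k
      unfolding T using X0[folded M] by simp_all
    fix U assume "openin T U" "0 \<in> U"
    then obtain r where r: "r > 0" "mball 0 r \<subseteq> U" unfolding T openin_mtopology by blast
    obtain k where "inverse (Suc k) < r" using r(1) reals_Archimedean by blast
    then have "mball 0 (inverse (Suc k)) \<subseteq> mball 0 r" by (intro mball_subset_concentric) simp
    then show "\<exists>k. mball 0 (inverse (Suc k)) \<subseteq> U" using r(2) by blast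
  qed
qed

lemma balanced_nhds_zero:
  assumes "openin T N" "0 \<in> N"
  obtains W where "openin T W" "0 \<in> W" "\<And>c z. cmod c \<le> 1 \<Longrightarrow> z \<in> W \<Longrightarrow> seq_scale c z \<in> N"
proof -
  define P where "P = {z \<in> topspace (prod_topology euclidean T). (\<lambda>(c, x). seq_scale c x) z \<in> N}"
  have "openin (prod_topology euclidean T) P"
    unfolding P_def by (rule openin_continuous_map_preimage[OF continuous_map_scale assms(1)])
  moreover have "(0, 0) \<in> P"
    using assms(2) cvec_subspace_zero[OF subspace] by (simp add: P_def)
  ultimately obtain U V where UV: "open U" "openin T V" "0 \<in> U" "0 \<in> V" "U \<times> V \<subseteq> P"
    unfolding openin_prod_topology_alt by force
  obtain d where d: "d > 0" "ball 0 d \<subseteq> U" using UV(1,3) open_contains_ball by blast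
  show thesis
  proof
    show "openin T {z\<in>X. seq_rscale (2 / d) z \<in> V}" by (rule openin_scale[OF UV(2)])
    show "0 \<in> {z\<in>X. seq_rscale (2 / d) z \<in> V}" using UV(4) cvec_subspace_zero[OF subspace] by simp
    fix c z assume c: "cmod c \<le> 1" and z: "z \<in> {z\<in>X. seq_rscale (2 / d) z \<in> V}"
    have "c * complex_of_real (d / 2) \<in> U"
      using c d by (intro subsetD[OF d(2)]) (simp add: norm_mult)
    then have "seq_scale (c * complex_of_real (d / 2)) (seq_rscale (2 / d) z) \<in> N"
      using UV(5) z by (auto simp: P_def)
    then show "seq_scale c z \<in> N" using d by simp
  qed
qed

lemma absorbing_disk_in_nhds:
  assumes "openin T N" "0 \<in> N"
  obtains A W where "absorbing_disk X A" "A \<subseteq> N" "openin T W" "0 \<in> W" "W \<subseteq> A"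
proof -
  obtain C where C: "openin T C" "0 \<in> C" "C \<subseteq> N" "seq_convex C"
    using locally_convex[OF assms] by blast
  obtain W where W: "openin T W" "0 \<in> W" "\<And>c z. cmod c \<le> 1 \<Longrightarrow> z \<in> W \<Longrightarrow> seq_scale c z \<in> C"
    using balanced_nhds_zero[OF C(1,2)] by blast
  define A where "A = {x\<in>X. \<forall>c. cmod c = 1 \<longrightarrow> seq_scale c x \<in> C}"
  have WA: "W \<subseteq> A" using W openin_subset[OF W(1)] by (auto simp: A_def)
  have "absorbing_disk X A"
  proof
    show "cvec_subspace X" by (rule subspace)
    show "seq_convex A"
      unfolding seq_convex_def
    proof (intro ballI allI impI)
      fix a b t assume ab: "a \<in> A" "b \<in> A" and t: "0 \<le> t \<and> t \<le> (1::real)"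
      have "seq_scale c (seq_add (seq_rscale t a) (seq_rscale (1 - t) b)) \<in> C" if "cmod c = 1" for c
      proof -
        have "seq_add (seq_rscale t (seq_scale c a)) (seq_rscale (1 - t) (seq_scale c b)) \<in> C"
          using C(4) ab t that unfolding seq_convex_def A_def by blast
        then show ?thesis by (simp add: seq_scale_add_right mult.commute)
      qed
      then show "seq_add (seq_rscale t a) (seq_rscale (1 - t) b) \<in> A"
        using ab by (auto simp: A_def intro: cvec_subspace_add[OF subspace] cvec_subspace_scale[OF subspace])
    qed
    show "seq_scale e a \<in> A" if e: "cmod e \<le> 1" and a: "a \<in> A" for e a
    proof -
      have "seq_scale c (seq_scale e a) \<in> C" if c: "cmod c = 1" for c
      proof (cases "e = 0")
        case False
        define u where "u = c * e / complex_of_real (cmod e)"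
        have "seq_scale u a \<in> C" using a c False by (simp add: A_def u_def norm_mult norm_divide)
        moreover have "0 \<le> cmod e" "cmod e \<le> 1" using e by simp_all
        ultimately have "seq_add (seq_rscale (cmod e) (seq_scale u a)) (seq_rscale (1 - cmod e) 0) \<in> C"
          using C(2,4) unfolding seq_convex_def by blast
        then show ?thesis using False by (simp add: u_def)
      qed (simp add: C(2))
      then show ?thesis using a by (auto simp: A_def intro: cvec_subspace_scale[OF subspace])
    qed
    fix x assume x: "x \<in> X"
    obtain t where t: "t > 0" "seq_rscale t x \<in> W" using nhds_zero_absorbing[OF W(1,2) x] by blast
    then have "x = seq_rscale (inverse t) (seq_rscale t x)" by simp
    then show "\<exists>t>0. \<exists>a\<in>A. x = seq_rscale t a" using t WA by (meson inverse_positive_iff_positive subsetD)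
  qed
  moreover have "A \<subseteq> N" using C(3) by (force simp: A_def dest: spec[of _ 1])
  ultimately show thesis using that W WA by blast
qed

end

lemma clinear_on_diff:
  "cvec_subspace X \<Longrightarrow> clinear_on X f \<Longrightarrow> x \<in> X \<Longrightarrow> y \<in> X \<Longrightarrow> f (x - y) = f x - f y"
  using clinear_on_add[of X f x "- y"] clinear_on_scale[of X f y "-1"] cvec_subspace_uminus[of X y]
  by simp

locale FK_seminorms = FK_space +
  fixes \<nu> :: "nat \<Rightarrow> cseq \<Rightarrow> real"
  assumes seminorm_nu: "seminorm_on X (\<nu> k)"
    and nu_mono: "k \<le> k' \<Longrightarrow> x \<in> X \<Longrightarrow> \<nu> k x \<le> \<nu> k' x"
    and nhds_zero_contains_nu_ball: "openin T U \<Longrightarrow> 0 \<in> U \<Longrightarrow> \<exists>k. \<forall>z\<in>X. \<nu> k z < 1 \<longrightarrow> z \<in> U"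
    and nu_ball_contains_nhds_zero: "e > 0 \<Longrightarrow> \<exists>W. openin T W \<and> 0 \<in> W \<and> (\<forall>z\<in>W. \<nu> k z < e)"

lemma (in FK_space) ex_FK_seminorms: obtains \<nu> where "FK_seminorms X T \<nu>"
proof -
  obtain B :: "nat \<Rightarrow> cseq set" where B: "\<And>k. openin T (B k)" "\<And>k. 0 \<in> B k"
    "\<And>U. openin T U \<Longrightarrow> 0 \<in> U \<Longrightarrow> \<exists>k. B k \<subseteq> U"
    using countable_nhds_base_zero by blast
  have "\<exists>A W. absorbing_disk X A \<and> A \<subseteq> B k \<and> openin T W \<and> 0 \<in> W \<and> W \<subseteq> A" for k
    by (rule absorbing_disk_in_nhds[OF B(1,2)]) blast
  then obtain A W where A: "\<And>k. absorbing_disk X (A k)" "\<And>k. A k \<subseteq> B k"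
    and W: "\<And>k. openin T (W k)" "\<And>k. 0 \<in> W k" "\<And>k. W k \<subseteq> A k"
    by metis
  define \<nu> where "\<nu> k x = (\<Sum>i\<le>k. minkowski (A i) x)" for k x
  have mink_nonneg: "0 \<le> minkowski (A i) x" if "x \<in> X" for i x
    using absorbing_disk.minkowski_nonneg[OF A(1) that] .
  have mink_le_nu: "minkowski (A k) x \<le> \<nu> k x" if "x \<in> X" for k x
    unfolding \<nu>_def using mink_nonneg that by (intro member_le_sum) auto
  show thesis
  proof (rule that, unfold_locales)
    show "seminorm_on X (\<nu> k)" for k
      unfolding seminorm_on_def
    proof (intro conjI ballI allI)
      fix x y assume "x \<in> X" "y \<in> X"
      then show "\<nu> k (x + y) \<le> \<nu> k x + \<nu> k y"
        unfolding \<nu>_def sum.distrib[symmetric] by (intro sum_mono absorbing_disk.minkowski_add[OF A(1)])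
    next
      fix c x assume "x \<in> X"
      then show "\<nu> k (seq_scale c x) = cmod c * \<nu> k x"
        unfolding \<nu>_def sum_distrib_left
        using seminorm_on_scale[OF absorbing_disk.seminorm_minkowski[OF A(1)]] by simp
    qed
    show "\<nu> k x \<le> \<nu> k' x" if "k \<le> k'" "x \<in> X" for k k' x
      unfolding \<nu>_def using that mink_nonneg by (intro sum_mono2) auto
    show "\<exists>k. \<forall>z\<in>X. \<nu> k z < 1 \<longrightarrow> z \<in> U" if U: "openin T U" "0 \<in> U" for U
    proof -
      obtain k where k: "B k \<subseteq> U" using B(3)[OF U] by blast
      have "z \<in> U" if z: "z \<in> X" "\<nu> k z < 1" for z
      proof -
        have "minkowski (A k) z < 1" using mink_le_nu[OF z(1), of k] z(2) by linarith
        then have "z \<in> A k" by (rule absorbing_disk.minkowski_less_one[OF A(1) z(1)])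
        then show ?thesis using A(2) k by blast
      qed
      then show ?thesis by blast
    qed
    show "\<exists>W. openin T W \<and> 0 \<in> W \<and> (\<forall>z\<in>W. \<nu> k z < e)" if e: "e > 0" for k e
    proof -
      define r where "r = e / (2 * real (Suc k))"
      have r: "r > 0" using e by (simp add: r_def)
      define V where "V = (\<Inter>i\<le>k. {z\<in>X. seq_rscale (inverse r) z \<in> W i})"
      have "openin T V" unfolding V_def by (intro openin_INT2 openin_scale W) auto
      moreover have "0 \<in> V" using W(2) cvec_subspace_zero[OF subspace] by (simp add: V_def)
      moreover have "\<nu> k z < e" if z: "z \<in> V" for z
      proof -
        have "minkowski (A i) z \<le> r" if "i \<le> k" for i
        proof -
          have "seq_rscale (inverse r) z \<in> A i" using z that W(3) by (auto simp: V_def)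
          from absorbing_disk.minkowski_le[OF A(1) r this] show ?thesis using r by simp
        qed
        then have "\<nu> k z \<le> (\<Sum>i\<le>k. r)" unfolding \<nu>_def by (intro sum_mono) simp
        also have "\<dots> = e / 2" by (simp del: of_nat_Suc add: r_def)
        also have "\<dots> < e" using e by simp
        finally show ?thesis .
      qed
      ultimately show ?thesis by blast
    qed
  qed
qed

context FK_seminorms
begin

lemmas nu_nonneg = seminorm_on_nonneg[OF subspace seminorm_nu]
  and nu_add = seminorm_on_add[OF seminorm_nu]
  and nu_scale = seminorm_on_scale[OF seminorm_nu]
  and nu_zero [simp] = seminorm_on_zero[OF subspace seminorm_nu]
  and nu_diff_commute = seminorm_on_diff_commute[OF subspace seminorm_nu]
  and nu_triangle_diff = seminorm_on_triangle_diff[OF subspace seminorm_nu]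
  and nu_diff_le = seminorm_on_diff_le[OF subspace seminorm_nu]
  and nu_sum = seminorm_on_sum[OF subspace seminorm_nu]

lemma openin_nu_ballsI:
  assumes "U \<subseteq> X" and balls: "\<And>x. x \<in> U \<Longrightarrow> \<exists>k e. e > 0 \<and> (\<forall>y\<in>X. \<nu> k (y - x) < e \<longrightarrow> y \<in> U)"
  shows "openin T U"
proof (rule openin_subopen[THEN iffD2], intro ballI)
  fix x assume x: "x \<in> U"
  then have xX: "x \<in> X" using assms(1) by blast
  obtain k e where "e > 0" and e: "\<forall>y\<in>X. \<nu> k (y - x) < e \<longrightarrow> y \<in> U" using balls[OF x] by blast
  then obtain W where W: "openin T W" "0 \<in> W" "\<forall>z\<in>W. \<nu> k z < e"
    using nu_ball_contains_nhds_zero by blast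
  define G where "G = {z\<in>X. z + - x \<in> W}"
  have "openin T G"
    unfolding G_def by (rule openin_translate[OF W(1) cvec_subspace_uminus[OF subspace xX]])
  moreover have "x \<in> G" using xX W(2) by (simp add: G_def)
  moreover have "G \<subseteq> U"
  proof
    fix z assume "z \<in> G"
    then have "z \<in> X" "\<nu> k (z - x) < e" using W(3) by (auto simp: G_def)
    then show "z \<in> U" using e by blast
  qed
  ultimately show "\<exists>G. openin T G \<and> x \<in> G \<and> G \<subseteq> U" by blast
qed

lemma openin_imp_nu_ball:
  assumes "openin T U" "x \<in> U"
  obtains k where "\<And>y. y \<in> X \<Longrightarrow> \<nu> k (y - x) < 1 \<Longrightarrow> y \<in> U"
proof -
  have x: "x \<in> X" using openin_subset[OF assms(1)] assms(2) by auto
  have "openin T {z\<in>X. z + x \<in> U}" by (rule openin_translate[OF assms(1) x])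
  moreover have "0 \<in> {z\<in>X. z + x \<in> U}" using assms(2) cvec_subspace_zero[OF subspace] by simp
  ultimately obtain k where k: "\<forall>z\<in>X. \<nu> k z < 1 \<longrightarrow> z \<in> {z\<in>X. z + x \<in> U}"
    using nhds_zero_contains_nu_ball by blast
  show thesis
  proof (rule that)
    fix y assume "y \<in> X" "\<nu> k (y - x) < 1"
    then have "(y - x) + x \<in> U" using k cvec_subspace_diff[OF subspace _ x] by blast
    then show "y \<in> U" by simp
  qed
qed

lemma openin_nu_ball: "x \<in> X \<Longrightarrow> openin T {y\<in>X. \<nu> k (y - x) < e}"
proof (rule openin_nu_ballsI)
  fix z assume x: "x \<in> X" and z: "z \<in> {y\<in>X. \<nu> k (y - x) < e}"
  have "\<nu> k (y - x) < e" if "y \<in> X" "\<nu> k (y - z) < e - \<nu> k (z - x)" for y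
    using nu_triangle_diff[of y z x k] that z x by simp
  then show "\<exists>k' e'. e' > 0 \<and> (\<forall>y\<in>X. \<nu> k' (y - z) < e' \<longrightarrow> y \<in> {y\<in>X. \<nu> k (y - x) < e})"
    using z by (intro exI[of _ k] exI[of _ "e - \<nu> k (z - x)"]) auto
qed auto

lemma limitin_iff_nu:
  assumes s: "\<And>n. s n \<in> X" and l: "l \<in> X"
  shows "limitin T s l sequentially \<longleftrightarrow> (\<forall>k e. e > 0 \<longrightarrow> (\<forall>\<^sub>F n in sequentially. \<nu> k (s n - l) < e))"
proof
  assume lim: "limitin T s l sequentially"
  show "\<forall>k e. e > 0 \<longrightarrow> (\<forall>\<^sub>F n in sequentially. \<nu> k (s n - l) < e)"
  proof (intro allI impI)
    fix k and e :: real assume "e > 0"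
    then have "l \<in> {y\<in>X. \<nu> k (y - l) < e}" using l by simp
    moreover have "\<forall>\<^sub>F n in sequentially. s n \<in> V" if "openin T V" "l \<in> V" for V
      using lim that unfolding limitin_def by blast
    ultimately have "\<forall>\<^sub>F n in sequentially. s n \<in> {y\<in>X. \<nu> k (y - l) < e}"
      using openin_nu_ball[OF l] by blast
    then show "\<forall>\<^sub>F n in sequentially. \<nu> k (s n - l) < e" by (rule eventually_mono) simp
  qed
next
  assume nu: "\<forall>k e. e > 0 \<longrightarrow> (\<forall>\<^sub>F n in sequentially. \<nu> k (s n - l) < e)"
  show "limitin T s l sequentially"
    unfolding limitin_def
  proof (intro conjI allI impI)
    fix U assume "openin T U \<and> l \<in> U"
    then obtain k where k: "\<And>y. y \<in> X \<Longrightarrow> \<nu> k (y - l) < 1 \<Longrightarrow> y \<in> U"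
      using openin_imp_nu_ball by blast
    have "\<forall>\<^sub>F n in sequentially. \<nu> k (s n - l) < 1" using nu by simp
    then show "\<forall>\<^sub>F n in sequentially. s n \<in> U" by (rule eventually_mono) (rule k[OF s])
  qed (use l in simp)
qed

lemma in_closure_of_iff_nu:
  assumes S: "S \<subseteq> X"
  shows "y \<in> T closure_of S \<longleftrightarrow> y \<in> X \<and> (\<forall>k e. e > 0 \<longrightarrow> (\<exists>z\<in>S. \<nu> k (z - y) < e))"
proof
  assume y: "y \<in> T closure_of S"
  then have yX: "y \<in> X" and meets: "\<And>U. y \<in> U \<Longrightarrow> openin T U \<Longrightarrow> \<exists>z. z \<in> S \<and> z \<in> U"
    unfolding in_closure_of by auto
  have "\<exists>z\<in>S. \<nu> k (z - y) < e" if "e > 0" for k e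
    using meets[of "{z\<in>X. \<nu> k (z - y) < e}"] openin_nu_ball[OF yX] yX that by auto
  with yX show "y \<in> X \<and> (\<forall>k e. e > 0 \<longrightarrow> (\<exists>z\<in>S. \<nu> k (z - y) < e))" by blast
next
  assume y: "y \<in> X \<and> (\<forall>k e. e > 0 \<longrightarrow> (\<exists>z\<in>S. \<nu> k (z - y) < e))"
  show "y \<in> T closure_of S"
    unfolding in_closure_of
  proof (intro conjI allI impI)
    fix U assume "y \<in> U \<and> openin T U"
    then obtain k where k: "\<And>z. z \<in> X \<Longrightarrow> \<nu> k (z - y) < 1 \<Longrightarrow> z \<in> U"
      using openin_imp_nu_ball by blast
    obtain z where "z \<in> S" "\<nu> k (z - y) < 1" using y zero_less_one by blast
    then show "\<exists>z. z \<in> S \<and> z \<in> U" using k S by blast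
  qed (use y in simp)
qed

lemma closedin_iff_nu:
  "closedin T S \<longleftrightarrow> S \<subseteq> X \<and> (\<forall>y\<in>X. (\<forall>k e. e > 0 \<longrightarrow> (\<exists>z\<in>S. \<nu> k (z - y) < e)) \<longrightarrow> y \<in> S)"
proof -
  have "closedin T S \<longleftrightarrow> S \<subseteq> X \<and> T closure_of S \<subseteq> S"
    using closure_of_subset_eq[of S T] by simp
  also have "\<dots> \<longleftrightarrow> S \<subseteq> X \<and> (\<forall>y\<in>X. (\<forall>k e. e > 0 \<longrightarrow> (\<exists>z\<in>S. \<nu> k (z - y) < e)) \<longrightarrow> y \<in> S)"
    using in_closure_of_iff_nu by blast
  finally show ?thesis .
qed

lemma cdualI:
  assumes f: "clinear_on X f" and bound: "\<And>x. x \<in> X \<Longrightarrow> cmod (f x) \<le> C * \<nu> K x"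
  shows "f \<in> cdual X T"
  unfolding cdual_iff continuous_map_def
proof (intro conjI f allI impI)
  fix U :: "complex set" assume "openin euclidean U"
  then have U: "open U" by simp
  show "openin T {x \<in> topspace T. f x \<in> U}"
  proof (rule openin_nu_ballsI)
    fix x0 assume x0: "x0 \<in> {x \<in> topspace T. f x \<in> U}"
    then obtain r where r: "r > 0" "ball (f x0) r \<subseteq> U" using U open_contains_ball by force
    have x0X: "x0 \<in> X" using x0 by simp
    have C1: "\<bar>C\<bar> + 1 > 0" by simp
    have "f y \<in> U" if y: "y \<in> X" "\<nu> K (y - x0) < r / (\<bar>C\<bar> + 1)" for y
    proof -
      have yx: "y - x0 \<in> X" by (rule cvec_subspace_diff[OF subspace y(1) x0X])
      have "cmod (f y - f x0) = cmod (f (y - x0))" using clinear_on_diff[OF subspace f y(1) x0X] by simp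
      also have "\<dots> \<le> C * \<nu> K (y - x0)" by (rule bound[OF yx])
      also have "\<dots> \<le> \<bar>C\<bar> * \<nu> K (y - x0)" by (rule mult_right_mono[OF _ nu_nonneg[OF yx]]) simp
      also have "\<dots> \<le> \<bar>C\<bar> * (r / (\<bar>C\<bar> + 1))" using y(2) by (intro mult_left_mono) auto
      also have "\<dots> < r" using r(1) C1 by (simp add: field_simps)
      finally show ?thesis using r(2) by (auto simp: dist_norm norm_minus_commute)
    qed
    then show "\<exists>k e. e > 0 \<and> (\<forall>y\<in>X. \<nu> k (y - x0) < e \<longrightarrow> y \<in> {x \<in> topspace T. f x \<in> U})"
      using r(1) by (intro exI[of _ K] exI[of _ "r / (\<bar>C\<bar> + 1)"]) auto
  qed simp
qed auto

lemma Cauchy_nu_imp_limitin: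
  assumes s: "\<And>n. s n \<in> X"
    and Cauchy: "\<And>k e. e > 0 \<Longrightarrow> \<exists>N. \<forall>m\<ge>N. \<forall>n\<ge>N. \<nu> k (s m - s n) < e"
  shows "\<exists>l\<in>X. limitin T s l sequentially"
proof (rule Cauchy_imp_limitin[OF s])
  fix U assume "openin T U" "0 \<in> U"
  from nhds_zero_contains_nu_ball[OF this] obtain k where k: "\<forall>z\<in>X. \<nu> k z < 1 \<longrightarrow> z \<in> U" ..
  obtain N where N: "\<forall>m\<ge>N. \<forall>n\<ge>N. \<nu> k (s m - s n) < 1" using Cauchy[of 1 k] by auto
  show "\<exists>N. \<forall>m n. N \<le> m \<and> N \<le> n \<longrightarrow> s m - s n \<in> U"
  proof (intro exI allI impI)
    fix m n assume "N \<le> m \<and> N \<le> n"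
    then show "s m - s n \<in> U" using N k cvec_subspace_diff[OF subspace s s] by blast
  qed
qed

lemma coordinate_le_nu: "\<exists>k. \<forall>z\<in>X. cmod (z j) \<le> \<nu> k z"
proof -
  have "openin T {z \<in> topspace T. z j \<in> ball 0 1}"
    by (rule openin_continuous_map_preimage[OF continuous_map_coordinate]) simp
  moreover have "0 \<in> {z \<in> topspace T. z j \<in> ball 0 1}" using cvec_subspace_zero[OF subspace] by simp
  ultimately have "\<exists>k. \<forall>z\<in>X. \<nu> k z < 1 \<longrightarrow> z \<in> {z \<in> topspace T. z j \<in> ball 0 1}"
    by (rule nhds_zero_contains_nu_ball)
  then obtain k where "\<forall>z\<in>X. \<nu> k z < 1 \<longrightarrow> z \<in> {z \<in> topspace T. z j \<in> ball 0 1}" ..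
  then have k: "\<And>z. z \<in> X \<Longrightarrow> \<nu> k z < 1 \<Longrightarrow> cmod (z j) < 1" by simp
  have "cmod (z j) \<le> \<nu> k z" if z: "z \<in> X" for z
  proof (rule dense_ge)
    fix t assume t: "\<nu> k z < t"
    then have t_pos: "t > 0" using nu_nonneg[OF z, of k] by simp
    have n: "cmod (complex_of_real (inverse t)) = inverse t" using t_pos by (subst norm_of_real) simp
    have "\<nu> k (seq_rscale (inverse t) z) = inverse t * \<nu> k z" by (simp only: nu_scale[OF z] n)
    also have "\<dots> < 1" using t t_pos by (simp add: field_simps)
    finally have "cmod (seq_rscale (inverse t) z j) < 1" by (rule k[OF cvec_subspace_scale[OF subspace z]])
    then have "inverse t * cmod (z j) < 1" by (simp only: seq_scale_apply norm_mult n)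
    then show "cmod (z j) \<le> t" using t_pos by (simp add: field_simps)
  qed
  then show ?thesis by blast
qed

end

context FK_seminorms
begin

definition fk_dist :: "cseq \<Rightarrow> cseq \<Rightarrow> real" where
  "fk_dist x y = (if x \<in> X \<and> y \<in> X then (SUP k. min ((1/2)^k) (\<nu> k (x - y))) else 0)"

lemma fk_dist_term_le:
  assumes "x \<in> X" "y \<in> X"
  shows "min ((1/2)^k) (\<nu> k (x - y)) \<le> fk_dist x y"
proof -
  have "bdd_above (range (\<lambda>k. min ((1/2::real)^k) (\<nu> k (x - y))))"
    by (rule bdd_aboveI[of _ 1]) (auto simp: min_le_iff_disj power_le_one)
  from cSUP_upper[OF UNIV_I this, of k] show ?thesis using assms by (simp add: fk_dist_def)
qed

lemma nu_le_fk_dist: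
  assumes "x \<in> X" "y \<in> X" "fk_dist x y < (1/2)^k"
  shows "\<nu> k (x - y) \<le> fk_dist x y"
  using fk_dist_term_le[OF assms(1,2), of k] assms(3) by (simp add: min_def split: if_splits)

lemma fk_dist_le_max:
  assumes x: "x \<in> X" and y: "y \<in> X"
  shows "fk_dist x y \<le> max (\<nu> k (x - y)) ((1/2)^Suc k)"
proof -
  have "min ((1/2)^j) (\<nu> j (x - y)) \<le> max (\<nu> k (x - y)) ((1/2)^Suc k)" for j
  proof (cases "j \<le> k")
    case True
    then have "\<nu> j (x - y) \<le> \<nu> k (x - y)" using cvec_subspace_diff[OF subspace x y] nu_mono by blast
    then show ?thesis by linarith
  next
    case False
    then have "(1/2::real)^j \<le> (1/2)^Suc k" by (intro power_decreasing) auto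
    then show ?thesis by linarith
  qed
  then show ?thesis using x y by (simp add: fk_dist_def cSUP_least)
qed

lemma Metric_space_fk_dist: "Metric_space X fk_dist"
proof
  fix x y
  show "0 \<le> fk_dist x y"
    using fk_dist_term_le[of x y 0] nu_nonneg[OF cvec_subspace_diff[OF subspace], of x y 0]
    by (cases "x \<in> X \<and> y \<in> X") (auto simp: fk_dist_def)
  show "fk_dist x y = fk_dist y x"
    using nu_diff_commute by (auto simp: fk_dist_def)
next
  fix x y assume x: "x \<in> X" and y: "y \<in> X"
  show "fk_dist x y = 0 \<longleftrightarrow> x = y"
  proof
    assume d0: "fk_dist x y = 0"
    have nu0: "\<nu> k (x - y) = 0" for k
      using nu_le_fk_dist[OF x y, of k] d0 nu_nonneg[OF cvec_subspace_diff[OF subspace x y], of k] by simp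
    have "x j = y j" for j
    proof -
      obtain k where "\<forall>z\<in>X. cmod (z j) \<le> \<nu> k z" using coordinate_le_nu by blast
      then have "cmod ((x - y) j) \<le> 0" using nu0 cvec_subspace_diff[OF subspace x y] by metis
      then show ?thesis by simp
    qed
    then show "x = y" by (simp add: fun_eq_iff)
  qed (simp add: fk_dist_def)
next
  fix x y z assume x: "x \<in> X" and y: "y \<in> X" and z: "z \<in> X"
  have "min ((1/2)^k) (\<nu> k (x - z)) \<le> fk_dist x y + fk_dist y z" for k
  proof -
    have "\<nu> k (x - z) \<le> \<nu> k (x - y) + \<nu> k (y - z)" by (rule nu_triangle_diff[OF x y z])
    moreover have "0 \<le> \<nu> k (x - y)" "0 \<le> \<nu> k (y - z)"
      using nu_nonneg cvec_subspace_diff[OF subspace] x y z by auto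
    moreover have "0 \<le> (1/2::real)^k" by simp
    ultimately have "min ((1/2)^k) (\<nu> k (x - z)) \<le>
        min ((1/2)^k) (\<nu> k (x - y)) + min ((1/2)^k) (\<nu> k (y - z))"
      by (smt (verit))
    also have "\<dots> \<le> fk_dist x y + fk_dist y z"
      using fk_dist_term_le x y z by (intro add_mono) auto
    finally show ?thesis .
  qed
  then show "fk_dist x z \<le> fk_dist x y + fk_dist y z"
    using x z by (simp add: fk_dist_def cSUP_least)
qed

interpretation fk_metric: Metric_space X fk_dist
  by (rule Metric_space_fk_dist)

lemma mtopology_fk_dist: "fk_metric.mtopology = T"
proof (rule topology_eq[THEN iffD2], intro allI iffI)
  fix U assume "openin fk_metric.mtopology U"
  then have U: "U \<subseteq> X" and balls: "\<And>x. x \<in> U \<Longrightarrow> \<exists>r>0. fk_metric.mball x r \<subseteq> U"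
    unfolding fk_metric.openin_mtopology by auto
  show "openin T U"
  proof (rule openin_nu_ballsI[OF U])
    fix x assume x: "x \<in> U"
    then obtain r where r: "r > 0" "fk_metric.mball x r \<subseteq> U" using balls by blast
    obtain k where "(1/2::real)^k < r" using real_arch_pow_inv[OF r(1), of "1/2"] by auto
    moreover have "(1/2::real)^Suc k \<le> (1/2)^k" by (rule power_decreasing) auto
    ultimately have k: "(1/2::real)^Suc k < r" by linarith
    have "y \<in> U" if y: "y \<in> X" "\<nu> k (y - x) < r" for y
    proof -
      have "fk_dist x y < r"
        using fk_dist_le_max[of x y k] nu_diff_commute[of y x k] x U y k by fastforce
      then have "y \<in> fk_metric.mball x r" using x U y by auto
      then show ?thesis using r(2) by blast
    qed
    then show "\<exists>k e. e > 0 \<and> (\<forall>y\<in>X. \<nu> k (y - x) < e \<longrightarrow> y \<in> U)" using r(1) by blast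
  qed
next
  fix U assume U: "openin T U"
  show "openin fk_metric.mtopology U"
    unfolding fk_metric.openin_mtopology
  proof (intro conjI allI impI)
    show "U \<subseteq> X" using openin_subset[OF U] by simp
    fix x assume x: "x \<in> U"
    then obtain k where k: "\<And>y. y \<in> X \<Longrightarrow> \<nu> k (y - x) < 1 \<Longrightarrow> y \<in> U"
      using openin_imp_nu_ball[OF U] by blast
    have "y \<in> U" if y: "y \<in> fk_metric.mball x ((1/2)^k)" for y
    proof -
      have xy: "x \<in> X" "y \<in> X" "fk_dist x y < (1/2)^k" using y by auto
      have "\<nu> k (y - x) < 1"
        using nu_le_fk_dist[OF xy] nu_diff_commute[of y x k] xy power_le_one[of "1/2::real" k] by simp
      then show ?thesis using k xy(2) by blast
    qed
    then show "\<exists>r>0. fk_metric.mball x r \<subseteq> U" by (intro exI[of _ "(1/2)^k"]) auto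
  qed
qed

lemma mcomplete_fk_dist: "fk_metric.mcomplete"
  unfolding fk_metric.mcomplete_def
proof (intro allI impI)
  fix \<sigma> assume "fk_metric.MCauchy \<sigma>"
  then have \<sigma>: "\<And>n. \<sigma> n \<in> X"
    and Cauchy: "\<And>\<epsilon>. \<epsilon> > 0 \<Longrightarrow> \<exists>N. \<forall>n n'. N \<le> n \<longrightarrow> N \<le> n' \<longrightarrow> fk_dist (\<sigma> n) (\<sigma> n') < \<epsilon>"
    unfolding fk_metric.MCauchy_def by auto
  have "\<exists>N. \<forall>m\<ge>N. \<forall>n\<ge>N. \<nu> k (\<sigma> m - \<sigma> n) < e" if e: "e > 0" for k e
  proof -
    obtain N where N: "\<And>m n. N \<le> m \<Longrightarrow> N \<le> n \<Longrightarrow> fk_dist (\<sigma> m) (\<sigma> n) < min e ((1/2)^k)"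
      using Cauchy[of "min e ((1/2)^k)"] e by auto
    have "\<nu> k (\<sigma> m - \<sigma> n) < e" if "N \<le> m" "N \<le> n" for m n
    proof -
      have "fk_dist (\<sigma> m) (\<sigma> n) < e" "fk_dist (\<sigma> m) (\<sigma> n) < (1/2)^k" using N[OF that] by auto
      with nu_le_fk_dist[OF \<sigma> \<sigma>] show ?thesis by fastforce
    qed
    then show ?thesis by blast
  qed
  from Cauchy_nu_imp_limitin[of \<sigma>, OF \<sigma> this]
  obtain l where "limitin T \<sigma> l sequentially" by blast
  then show "\<exists>x. limitin fk_metric.mtopology \<sigma> x sequentially" by (auto simp: mtopology_fk_dist)
qed

theorem completely_metrizable: "completely_metrizable_space T"
  unfolding completely_metrizable_space_def
  using Metric_space_fk_dist mcomplete_fk_dist mtopology_fk_dist by metis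

end

lemma (in FK_space) cvec_subspace_closure_of:
  assumes S: "cvec_subspace S" "S \<subseteq> X"
  shows "cvec_subspace (T closure_of S)"
  unfolding cvec_subspace_def seq_add_eq seq_zero_eq
proof (intro conjI ballI allI)
  show "0 \<in> T closure_of S" using closure_of_subset[of S T] S cvec_subspace_zero[OF S(1)] by auto
next
  fix x y assume "x \<in> T closure_of S" "y \<in> T closure_of S"
  then have "x + y \<in> (\<lambda>(x, y). x + y) ` (prod_topology T T closure_of (S \<times> S))"
    by (force simp: closure_of_Times)
  also have "\<dots> \<subseteq> T closure_of ((\<lambda>(x, y). x + y) ` (S \<times> S))"
    by (rule continuous_map_image_closure_subset[OF continuous_map_add])
  also have "\<dots> \<subseteq> T closure_of S"
    by (rule closure_of_mono) (auto intro: cvec_subspace_add[OF S(1)])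
  finally show "x + y \<in> T closure_of S" .
next
  fix c x assume "x \<in> T closure_of S"
  then have "seq_scale c x \<in> seq_scale c ` (T closure_of S)" by blast
  also have "\<dots> \<subseteq> T closure_of (seq_scale c ` S)"
    by (rule continuous_map_image_closure_subset[OF continuous_map_scale_right])
  also have "\<dots> \<subseteq> T closure_of S"
    by (rule closure_of_mono) (auto intro: cvec_subspace_scale[OF S(1)])
  finally show "seq_scale c x \<in> T closure_of S" .
qed

definition line_sum :: "cseq set \<Rightarrow> cseq \<Rightarrow> cseq set" where
  "line_sum L x0 = {y + seq_scale c x0 | y c. y \<in> L}"

lemma cvec_subspace_line_sum:
  assumes L: "cvec_subspace L"
  shows "cvec_subspace (line_sum L x0)"
  unfolding cvec_subspace_def seq_add_eq seq_zero_eq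
proof (intro conjI ballI allI)
  show "0 \<in> line_sum L x0"
    unfolding line_sum_def using cvec_subspace_zero[OF L] by (intro CollectI exI[of _ 0] exI[of _ 0]) simp
  fix a b assume "a \<in> line_sum L x0" "b \<in> line_sum L x0"
  then obtain y c y' c' where "y \<in> L" "a = y + seq_scale c x0" "y' \<in> L" "b = y' + seq_scale c' x0"
    unfolding line_sum_def by blast
  moreover have "y + y' \<in> L" using calculation cvec_subspace_add[OF L] by blast
  ultimately show "a + b \<in> line_sum L x0" unfolding line_sum_def
    by (intro CollectI exI[of _ "y + y'"] exI[of _ "c + c'"]) (simp add: seq_scale_add_left algebra_simps)
next
  fix e a assume "a \<in> line_sum L x0"
  then obtain y c where "y \<in> L" "a = y + seq_scale c x0" unfolding line_sum_def by blast
  moreover have "seq_scale e y \<in> L" using calculation cvec_subspace_scale[OF L] by blast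
  ultimately show "seq_scale e a \<in> line_sum L x0" unfolding line_sum_def
    by (intro CollectI exI[of _ "seq_scale e y"] exI[of _ "e * c"]) (simp add: seq_scale_add_right)
qed

lemma line_sum_coeff_unique:
  assumes L: "cvec_subspace L" and x0: "x0 \<notin> L" and y: "y \<in> L" "y' \<in> L"
    and eq: "y + seq_scale c x0 = y' + seq_scale c' x0"
  shows "c = c'"
proof (rule ccontr)
  assume ne: "c \<noteq> c'"
  have "seq_scale (c - c') x0 = y' - y" using eq by (simp add: seq_scale_diff_left algebra_simps)
  then have "seq_scale (inverse (c - c')) (seq_scale (c - c') x0) = seq_scale (inverse (c - c')) (y' - y)"
    by simp
  then have "x0 = seq_scale (inverse (c - c')) (y' - y)" using ne by simp
  then show False using x0 L y by (metis cvec_subspace_diff cvec_subspace_scale)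
qed

lemma line_sum_functional:
  assumes L: "cvec_subspace L" and x0: "x0 \<notin> L"
  obtains g where "clinear_on (line_sum L x0) g" "\<And>y c. y \<in> L \<Longrightarrow> g (y + seq_scale c x0) = c * \<alpha>"
proof -
  define g where "g x = (THE c. \<exists>y\<in>L. x = y + seq_scale c x0) * \<alpha>" for x
  have g: "g (y + seq_scale c x0) = c * \<alpha>" if "y \<in> L" for y c
    unfolding g_def using that line_sum_coeff_unique[OF L x0]
    by (intro arg_cong2[where f = "(*)"] the_equality) blast+
  have "clinear_on (line_sum L x0) g"
    unfolding clinear_on_def
  proof (intro conjI ballI allI)
    fix a b assume "a \<in> line_sum L x0" "b \<in> line_sum L x0"
    then obtain y c y' c' where yc: "y \<in> L" "a = y + seq_scale c x0" "y' \<in> L" "b = y' + seq_scale c' x0"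
      unfolding line_sum_def by blast
    then have "a + b = (y + y') + seq_scale (c + c') x0"
      by (simp add: seq_scale_add_left algebra_simps)
    then have "g (a + b) = (c + c') * \<alpha>" using g cvec_subspace_add[OF L yc(1,3)] by simp
    then show "g (a + b) = g a + g b" using g yc by (simp add: algebra_simps)
  next
    fix e a assume "a \<in> line_sum L x0"
    then obtain y c where "y \<in> L" "a = y + seq_scale c x0" unfolding line_sum_def by blast
    moreover have "seq_scale e a = seq_scale e y + seq_scale (e * c) x0"
      using calculation by (simp add: seq_scale_add_right)
    ultimately show "g (seq_scale e a) = e * g a"
      using g cvec_subspace_scale[OF L] by simp
  qed
  then show thesis using that g by blast
qed

context FK_seminorms
begin

lemma closed_cover_contains_nu_ball:
  fixes A :: "nat \<Rightarrow> cseq set"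
  assumes S: "closedin T S" "S \<noteq> {}" and A: "\<And>m. closedin T (A m)" and cover: "S \<subseteq> (\<Union>m. A m)"
  shows "\<exists>m k. \<exists>y0\<in>S. \<forall>y\<in>S. \<nu> k (y - y0) < 1 \<longrightarrow> y \<in> A m"
proof (rule ccontr)
  assume no_ball: "\<not> ?thesis"
  let ?S = "subtopology T S"
  have "?S interior_of \<Union>(range (\<lambda>m. S \<inter> A m)) = {}"
  proof (rule Baire_category_alt)
    show "completely_metrizable_space ?S \<or> locally_compact_space ?S \<and> regular_space ?S"
      using completely_metrizable_space_closedin[OF completely_metrizable S(1)] by blast
    show "countable (range (\<lambda>m. S \<inter> A m))" by simp
    fix G assume "G \<in> range (\<lambda>m. S \<inter> A m)"
    then obtain m where G: "G = S \<inter> A m" by blast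
    show "closedin ?S G \<and> ?S interior_of G = {}"
    proof
      show "closedin ?S G" unfolding G closedin_subtopology using A[of m] by blast
      show "?S interior_of G = {}"
      proof (rule ccontr)
        assume "?S interior_of G \<noteq> {}"
        then obtain y0 U where U: "openin T U" "y0 \<in> U \<inter> S" "U \<inter> S \<subseteq> G"
          unfolding interior_of_def openin_subtopology by blast
        obtain k where k: "\<And>y. y \<in> X \<Longrightarrow> \<nu> k (y - y0) < 1 \<Longrightarrow> y \<in> U"
          using openin_imp_nu_ball[OF U(1)] U(2) by blast
        have "\<forall>y\<in>S. \<nu> k (y - y0) < 1 \<longrightarrow> y \<in> A m"
          using k U(3) closedin_subset[OF S(1)] by (auto simp: G)
        then show False using no_ball U(2) by blast
      qed
    qed
  qed
  moreover have "\<Union>(range (\<lambda>m. S \<inter> A m)) = topspace ?S"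
    using cover closedin_subset[OF S(1)] by auto
  ultimately have "topspace ?S = {}" by (metis interior_of_topspace)
  then show False using S(2) closedin_subset[OF S(1)] by auto
qed

lemma exists_cdual_annihilating:
  assumes L: "cvec_subspace L" "L \<subseteq> X" and x0: "x0 \<in> X" "x0 \<notin> L" and C: "0 \<le> C"
    and bound: "\<And>y c. y \<in> L \<Longrightarrow> cmod (c * \<alpha>) \<le> C * \<nu> K (y + seq_scale c x0)"
  obtains F where "F \<in> cdual X T" "\<And>x. x \<in> X \<Longrightarrow> cmod (F x) \<le> C * \<nu> K x"
    "\<And>y. y \<in> L \<Longrightarrow> F y = 0" "F x0 = \<alpha>"
proof -
  obtain g where g: "clinear_on (line_sum L x0) g" "\<And>y c. y \<in> L \<Longrightarrow> g (y + seq_scale c x0) = c * \<alpha>"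
    using line_sum_functional[OF L(1) x0(2)] by blast
  have on_line: "y + seq_scale c x0 \<in> line_sum L x0" if "y \<in> L" for y c
    using that unfolding line_sum_def by blast
  have LX: "line_sum L x0 \<subseteq> X"
    unfolding line_sum_def using L(2) x0(1) cvec_subspace_add[OF subspace] cvec_subspace_scale[OF subspace]
    by blast
  have g_bound: "cmod (g x) \<le> C * \<nu> K x" if x: "x \<in> line_sum L x0" for x
  proof -
    obtain y c where "y \<in> L" "x = y + seq_scale c x0" using x unfolding line_sum_def by blast
    then show ?thesis using g(2) bound by simp
  qed
  obtain F where F: "clinear_on X F" "\<And>x. x \<in> line_sum L x0 \<Longrightarrow> F x = g x"
    "\<And>x. x \<in> X \<Longrightarrow> cmod (F x) \<le> C * \<nu> K x"
    using hahn_banach_complex[OF subspace seminorm_on_cmult[OF seminorm_nu C]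
        cvec_subspace_line_sum[OF L(1)] LX g(1) g_bound] by blast
  have F_line: "F (y + seq_scale c x0) = c * \<alpha>" if "y \<in> L" for y c
    using F(2)[OF on_line[OF that]] g(2)[OF that] by simp
  show thesis
  proof (rule that[OF cdualI[OF F(1) F(3)] F(3)])
    show "F y = 0" if "y \<in> L" for y using F_line[OF that, of 0] by simp
    show "F x0 = \<alpha>" using F_line[OF cvec_subspace_zero[OF L(1)], of 1] by simp
  qed
qed

end

context FK_seminorms
begin

lemma exists_norming_cdual:
  assumes x0: "x0 \<in> X"
  obtains F where "F \<in> cdual X T" "\<And>x. x \<in> X \<Longrightarrow> cmod (F x) \<le> \<nu> k x" "F x0 = \<nu> k x0"
proof (cases "x0 = 0")
  case True
  have "(\<lambda>x. 0) \<in> cdual X T" by (rule cdualI[of _ 0 k]) (simp_all add: clinear_on_def)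
  then show thesis using True nu_nonneg by (intro that[of "\<lambda>x. 0"]) auto
next
  case False
  have L: "cvec_subspace {0}" "{0} \<subseteq> X" "x0 \<notin> {0}"
    using False cvec_subspace_zero[OF subspace] by (auto simp: cvec_subspace_def)
  have bound: "cmod (c * complex_of_real (\<nu> k x0)) \<le> 1 * \<nu> k (y + seq_scale c x0)" if "y \<in> {0}" for y c
    using that nu_scale[OF x0] nu_nonneg[OF x0] by (simp add: norm_mult)
  obtain F where "F \<in> cdual X T" "\<And>x. x \<in> X \<Longrightarrow> cmod (F x) \<le> 1 * \<nu> k x"
    "\<And>y. y \<in> {0} \<Longrightarrow> F y = 0" "F x0 = complex_of_real (\<nu> k x0)"
    using exists_cdual_annihilating[OF L(1,2) x0 L(3) zero_le_one bound] by blast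
  then show thesis using that[of F] by simp
qed

lemma exists_cdual_vanishing_on_closed_subspace:
  assumes Y: "closedin T Y" "cvec_subspace Y" and x: "x \<in> X" "x \<notin> Y"
  obtains F where "F \<in> cdual X T" "\<And>y. y \<in> Y \<Longrightarrow> F y = 0" "F x = 1"
proof -
  have YX: "Y \<subseteq> X" using closedin_subset[OF Y(1)] by simp
  have "\<not> (\<forall>k e. e > 0 \<longrightarrow> (\<exists>z\<in>Y. \<nu> k (z - x) < e))" using Y(1) x unfolding closedin_iff_nu by blast
  then obtain K e where e: "e > 0" and "\<forall>z\<in>Y. \<not> \<nu> K (z - x) < e" by blast
  then have far: "\<And>z. z \<in> Y \<Longrightarrow> e \<le> \<nu> K (z - x)" by (simp add: not_less)
  have bound: "cmod (c * 1) \<le> (1 / e) * \<nu> K (y + seq_scale c x)" if y: "y \<in> Y" for y c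
  proof (cases "c = 0")
    case False
    define z where "z = seq_scale (- inverse c) y"
    have z: "z \<in> Y" using cvec_subspace_scale[OF Y(2) y] by (simp add: z_def)
    have "y + seq_scale c x = seq_scale c (x - z)"
      using False by (simp add: z_def seq_scale_diff_right)
    then have "\<nu> K (y + seq_scale c x) = cmod c * \<nu> K (z - x)"
      using nu_scale nu_diff_commute cvec_subspace_diff[OF subspace] x(1) z YX by auto
    also have "\<dots> \<ge> cmod c * e" using far[OF z] by (simp add: mult_left_mono)
    finally show ?thesis using e by (simp add: field_simps)
  qed (use e nu_nonneg[of y K] YX y in auto)
  have "0 \<le> 1 / e" using e by simp
  then obtain F where "F \<in> cdual X T" "\<And>x. x \<in> X \<Longrightarrow> cmod (F x) \<le> 1 / e * \<nu> K x"
    "\<And>y. y \<in> Y \<Longrightarrow> F y = 0" "F x = 1"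
    using exists_cdual_annihilating[OF Y(2) YX x _ bound] by blast
  then show thesis using that[of F] by simp
qed

end

definition phase :: "complex \<Rightarrow> complex" where
  "phase z = (if z = 0 then 1 else sgn z)"

lemma norm_phase [simp]: "cmod (phase z) = 1"
  by (simp add: phase_def norm_sgn)

lemma norm_add_phase_ge:
  assumes "0 \<le> t"
  shows "t \<le> cmod (s + phase s * complex_of_real t)"
proof (cases "s = 0")
  case False
  have "s + phase s * complex_of_real t = sgn s * complex_of_real (cmod s + t)"
    using False by (simp add: phase_def sgn_eq field_simps)
  then have "cmod (s + phase s * complex_of_real t) = cmod s + t"
    using assms False by (simp add: norm_mult norm_sgn del: of_real_add)
  then show ?thesis by simp
qed (use assms in \<open>simp add: phase_def\<close>)

fun hump_coeff :: "(nat \<Rightarrow> cseq \<Rightarrow> complex) \<Rightarrow> (nat \<Rightarrow> cseq) \<Rightarrow> nat \<Rightarrow> complex" where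
  "hump_coeff F a j = complex_of_real ((1/3)^j) * phase (\<Sum>i<j. hump_coeff F a i * F i (a j))"

declare hump_coeff.simps [simp del]

lemma norm_hump_coeff: "cmod (hump_coeff F a j) = (1/3)^j"
  by (subst hump_coeff.simps) (simp add: norm_mult norm_power)

lemma summable_one_third_powers: "summable (\<lambda>i. (1/3::real)^i)"
  and suminf_one_third_powers: "(\<Sum>i. (1/3::real)^i) = 3/2"
  using summable_geometric[of "1/3::real"] suminf_geometric[of "1/3::real"] by simp_all

context FK_seminorms
begin

lemma cdual_series:
  assumes F: "\<And>i. F i \<in> cdual X T"
    and bound: "\<And>i x. x \<in> X \<Longrightarrow> cmod (c i * F i x) \<le> (1/3)^i * \<nu> k x"
  shows "(\<lambda>x. \<Sum>i. c i * F i x) \<in> cdual X T"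
proof -
  have F_lin: "clinear_on X (F i)" for i using F cdual_iff by blast
  have geom: "summable (\<lambda>i. (1/3::real)^i * \<nu> k x)" for x
    by (rule summable_mult2[OF summable_one_third_powers])
  have norm_summable: "summable (\<lambda>i. cmod (c i * F i x))" if "x \<in> X" for x
    by (rule summable_comparison_test'[OF geom]) (use bound[OF that] in simp)
  have summable: "summable (\<lambda>i. c i * F i x)" if "x \<in> X" for x
    by (rule summable_norm_cancel[OF norm_summable[OF that]])
  show ?thesis
  proof (rule cdualI)
    show "clinear_on X (\<lambda>x. \<Sum>i. c i * F i x)"
      unfolding clinear_on_def
    proof (intro conjI ballI allI)
      fix x y assume xy: "x \<in> X" "y \<in> X"
      have "(\<Sum>i. c i * F i (x + y)) = (\<Sum>i. c i * F i x + c i * F i y)"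
        using clinear_on_add[OF F_lin xy] by (simp add: distrib_left)
      also have "\<dots> = (\<Sum>i. c i * F i x) + (\<Sum>i. c i * F i y)"
        by (rule suminf_add[symmetric, OF summable summable]) (use xy in auto)
      finally show "(\<Sum>i. c i * F i (x + y)) = (\<Sum>i. c i * F i x) + (\<Sum>i. c i * F i y)" .
    next
      fix e x assume x: "x \<in> X"
      have "(\<Sum>i. c i * F i (seq_scale e x)) = (\<Sum>i. e * (c i * F i x))"
        using clinear_on_scale[OF F_lin x] by (simp add: algebra_simps)
      also have "\<dots> = e * (\<Sum>i. c i * F i x)" by (rule suminf_mult[OF summable[OF x]])
      finally show "(\<Sum>i. c i * F i (seq_scale e x)) = e * (\<Sum>i. c i * F i x)" .
    qed
    fix x assume x: "x \<in> X"
    have "cmod (\<Sum>i. c i * F i x) \<le> (\<Sum>i. cmod (c i * F i x))"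
      by (rule summable_norm[OF norm_summable[OF x]])
    also have "\<dots> \<le> (\<Sum>i. (1/3)^i * \<nu> k x)"
      by (rule suminf_le[OF bound[OF x] norm_summable[OF x] geom])
    also have "\<dots> = 3/2 * \<nu> k x"
      using suminf_mult2[OF summable_one_third_powers, of "\<nu> k x"] suminf_one_third_powers by simp
    finally show "cmod (\<Sum>i. c i * F i x) \<le> 3/2 * \<nu> k x" .
  qed
qed

lemma gliding_hump:
  assumes a: "\<And>j. a j \<in> X"
    and F: "\<And>j. F j \<in> cdual X T" "\<And>j x. x \<in> X \<Longrightarrow> cmod (F j x) \<le> \<nu> k x"
      "\<And>j. F j (a j) = \<nu> k (a j)"
  shows "\<exists>f\<in>cdual X T. \<forall>j. (1/3)^j * \<nu> k (a j) / 2 \<le> cmod (f (a j))"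
proof -
  define c where "c = hump_coeff F a"
  have c_bound: "cmod (c i * F i x) \<le> (1/3)^i * \<nu> k x" if "x \<in> X" for i x
    using F(2)[OF that, of i] by (simp add: c_def norm_mult norm_hump_coeff)
  define f where "f x = (\<Sum>i. c i * F i x)" for x
  have "(1/3)^j * \<nu> k (a j) / 2 \<le> cmod (f (a j))" for j
  proof -
    define g where "g i = c i * F i (a j)" for i
    have g_norm: "cmod (g i) \<le> (1/3)^i * \<nu> k (a j)" for i
      using c_bound[OF a] by (simp add: g_def)
    have norm_summable: "summable (\<lambda>i. cmod (g i))"
      by (rule summable_comparison_test'[OF summable_mult2[OF summable_one_third_powers]])
        (use g_norm in simp)
    define s where "s = (\<Sum>i<j. g i)"
    have head_eq: "(\<Sum>i<Suc j. g i) = s + phase s * complex_of_real ((1/3)^j * \<nu> k (a j))"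
      using hump_coeff.simps[of F a j] F(3)[of j]
      by (simp add: s_def g_def c_def mult_ac)
    have head: "(1/3)^j * \<nu> k (a j) \<le> cmod (\<Sum>i<Suc j. g i)"
      unfolding head_eq by (rule norm_add_phase_ge) (simp add: nu_nonneg[OF a])
    have "cmod (\<Sum>i. g (i + Suc j)) \<le> (\<Sum>i. cmod (g (i + Suc j)))"
      using summable_ignore_initial_segment[OF norm_summable] by (rule summable_norm)
    also have "\<dots> \<le> (\<Sum>i. (1/3)^(i + Suc j) * \<nu> k (a j))"
      using summable_ignore_initial_segment[OF norm_summable]
        summable_ignore_initial_segment[OF summable_mult2[OF summable_one_third_powers]]
      by (rule suminf_le[OF g_norm])
    also have "\<dots> = (\<Sum>i. (1/3::real)^i) * ((1/3)^Suc j * \<nu> k (a j))"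
      by (subst suminf_mult2[OF summable_one_third_powers]) (simp add: power_add mult.assoc)
    also have "\<dots> = (1/3)^j * \<nu> k (a j) / 2" by (simp add: suminf_one_third_powers)
    finally have tail: "cmod (\<Sum>i. g (i + Suc j)) \<le> (1/3)^j * \<nu> k (a j) / 2" .
    have "f (a j) = (\<Sum>i. g (i + Suc j)) + (\<Sum>i<Suc j. g i)"
      unfolding f_def g_def[symmetric]
      by (rule suminf_split_initial_segment[OF summable_norm_cancel[OF norm_summable]])
    then have "cmod (\<Sum>i<Suc j. g i) - cmod (\<Sum>i. g (i + Suc j)) \<le> cmod (f (a j))"
      by (metis add.commute norm_diff_ineq)
    then show ?thesis using head tail by linarith
  qed
  moreover have "f \<in> cdual X T" unfolding f_def by (rule cdual_series[OF F(1) c_bound])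
  ultimately show ?thesis by blast
qed

theorem weakly_bounded_imp_bounded:
  assumes b: "\<And>n. b n \<in> X"
    and weakly_bounded: "\<And>f. f \<in> cdual X T \<Longrightarrow> \<exists>M. \<forall>n. cmod (f (b n)) \<le> M"
  shows "\<exists>B. \<forall>n. \<nu> k (b n) \<le> B"
proof (rule ccontr)
  assume "\<nexists>B. \<forall>n. \<nu> k (b n) \<le> B"
  then have "\<forall>j. \<exists>n. 2 * 3^j * (real j + 1) \<le> \<nu> k (b n)"
    by (meson linorder_not_le less_imp_le)
  then obtain N where N: "\<And>j. 2 * 3^j * (real j + 1) \<le> \<nu> k (b (N j))" by metis
  define a where "a j = b (N j)" for j
  have a: "a j \<in> X" for j using b by (simp add: a_def)
  have "\<forall>j. \<exists>G. G \<in> cdual X T \<and> (\<forall>x\<in>X. cmod (G x) \<le> \<nu> k x) \<and> G (a j) = \<nu> k (a j)"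
  proof
    fix j
    obtain G where "G \<in> cdual X T" "\<And>x. x \<in> X \<Longrightarrow> cmod (G x) \<le> \<nu> k x" "G (a j) = \<nu> k (a j)"
      using exists_norming_cdual[OF a] by blast
    then show "\<exists>G. G \<in> cdual X T \<and> (\<forall>x\<in>X. cmod (G x) \<le> \<nu> k x) \<and> G (a j) = \<nu> k (a j)" by blast
  qed
  then obtain F where F: "\<And>j. F j \<in> cdual X T" "\<And>j x. x \<in> X \<Longrightarrow> cmod (F j x) \<le> \<nu> k x"
    "\<And>j. F j (a j) = \<nu> k (a j)"
    by metis
  obtain f where f: "f \<in> cdual X T" "\<And>j. (1/3)^j * \<nu> k (a j) / 2 \<le> cmod (f (a j))"
    using gliding_hump[where a = a and F = F, OF a F] by blast
  obtain M where M: "\<And>n. cmod (f (b n)) \<le> M" using weakly_bounded[OF f(1)] by blast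
  obtain j :: nat where j: "M < real j" using reals_Archimedean2 by blast
  have "(1/3::real)^j * (2 * 3^j * (real j + 1)) / 2 \<le> (1/3)^j * \<nu> k (a j) / 2"
    using N[of j] by (intro divide_right_mono mult_left_mono) (auto simp: a_def)
  moreover have "(1/3::real)^j * (2 * 3^j * (real j + 1)) / 2 = real j + 1"
    by (simp add: power_one_over field_simps)
  ultimately show False using f(2)[of j] M[of "N j"] j by (simp add: a_def)
qed

end

lemma homogeneous_bound:
  fixes a v M :: real
  assumes a: "0 \<le> a" and M: "0 \<le> M" and scaled: "\<And>t. t > 0 \<Longrightarrow> t * a < 1 \<Longrightarrow> t * v \<le> M"
  shows "v \<le> 2 * M * a"
proof (cases "a = 0")
  case True
  show ?thesis
  proof (rule ccontr)
    assume "\<not> v \<le> 2 * M * a"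
    then have "v > 0" using True by simp
    then have "(M + 1) / v * v \<le> M" using scaled[of "(M + 1) / v"] True M by simp
    then show False using \<open>v > 0\<close> by simp
  qed
next
  case False
  then have "1 / (2 * a) * v \<le> M" using scaled[of "1 / (2 * a)"] a by simp
  then show ?thesis using a False by (simp add: field_simps)
qed

context FK_seminorms
begin

context
  fixes L :: "'i \<Rightarrow> cseq \<Rightarrow> cseq"
  assumes L_X: "\<And>i x. x \<in> X \<Longrightarrow> L i x \<in> X"
    and L_add: "\<And>i x y. x \<in> X \<Longrightarrow> y \<in> X \<Longrightarrow> L i (x + y) = L i x + L i y"
    and L_scale: "\<And>i c x. x \<in> X \<Longrightarrow> L i (seq_scale c x) = seq_scale c (L i x)"
    and L_cont: "\<And>i k. \<exists>K C. \<forall>x\<in>X. \<nu> k (L i x) \<le> C * \<nu> K x"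
begin

lemma L_diff: "x \<in> X \<Longrightarrow> y \<in> X \<Longrightarrow> L i (x - y) = L i x - L i y"
  using L_add[of x "- y" i] L_scale[of y i "-1"] cvec_subspace_uminus[OF subspace] by simp

lemma closedin_uniform_nu_sublevel: "closedin T {y\<in>X. \<forall>i. \<nu> k (L i y) \<le> B}"
  unfolding closedin_iff_nu
proof (intro conjI ballI impI allI)
  fix y assume y: "y \<in> X"
    and approx: "\<forall>K e. e > 0 \<longrightarrow> (\<exists>z\<in>{y\<in>X. \<forall>i. \<nu> k (L i y) \<le> B}. \<nu> K (z - y) < e)"
  have "\<nu> k (L i y) \<le> B" for i
  proof (rule field_le_epsilon)
    obtain K C where C: "\<And>x. x \<in> X \<Longrightarrow> \<nu> k (L i x) \<le> C * \<nu> K x" using L_cont by blast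
    fix e :: real assume e: "e > 0"
    have "e / (\<bar>C\<bar> + 1) > 0" using e by (simp add: add_nonneg_pos)
    then obtain z where z: "z \<in> X" "\<forall>i. \<nu> k (L i z) \<le> B" "\<nu> K (z - y) < e / (\<bar>C\<bar> + 1)"
      using approx by blast
    have yz: "y - z \<in> X" by (rule cvec_subspace_diff[OF subspace y z(1)])
    have "L i z + L i (y - z) = L i y" using L_diff[OF y z(1)] by simp
    moreover have "\<nu> k (L i z + L i (y - z)) \<le> \<nu> k (L i z) + \<nu> k (L i (y - z))"
      by (rule nu_add[OF L_X[OF z(1)] L_X[OF yz]])
    ultimately have "\<nu> k (L i y) \<le> \<nu> k (L i z) + \<nu> k (L i (y - z))" by simp
    also have "\<nu> k (L i (y - z)) \<le> C * \<nu> K (y - z)" by (rule C[OF yz])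
    also have "\<dots> \<le> \<bar>C\<bar> * \<nu> K (y - z)" by (rule mult_right_mono[OF _ nu_nonneg[OF yz]]) simp
    also have "\<nu> K (y - z) = \<nu> K (z - y)" by (rule nu_diff_commute[OF y z(1)])
    also have "\<bar>C\<bar> * \<nu> K (z - y) \<le> \<bar>C\<bar> * (e / (\<bar>C\<bar> + 1))"
      using z(3) by (intro mult_left_mono) auto
    also have "\<dots> \<le> e" using e by (simp add: field_simps)
    finally show "\<nu> k (L i y) \<le> B + e" using z(2)[rule_format, of i] by linarith
  qed
  then show "y \<in> {y\<in>X. \<forall>i. \<nu> k (L i y) \<le> B}" using y by blast
qed auto

theorem uniform_boundedness:
  assumes S: "closedin T S" "cvec_subspace S"
    and pointwise_bounded: "\<And>y. y \<in> S \<Longrightarrow> \<exists>B. \<forall>i. \<nu> k (L i y) \<le> B"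
  shows "\<exists>K C. \<forall>y\<in>S. \<forall>i. \<nu> k (L i y) \<le> C * \<nu> K y"
proof -
  have SX: "S \<subseteq> X" using closedin_subset[OF S(1)] by simp
  define A where "A m = {y\<in>X. \<forall>i. \<nu> k (L i y) \<le> real m}" for m :: nat
  have cover: "S \<subseteq> (\<Union>m. A m)"
  proof
    fix y assume y: "y \<in> S"
    obtain B where B: "\<And>i. \<nu> k (L i y) \<le> B" using pointwise_bounded[OF y] by blast
    obtain m :: nat where "B \<le> real m" using real_arch_simple by blast
    then have "y \<in> A m" using B y SX by (auto simp: A_def intro: order_trans)
    then show "y \<in> (\<Union>m. A m)" by blast
  qed
  have "closedin T (A m)" for m unfolding A_def by (rule closedin_uniform_nu_sublevel)
  moreover have "S \<noteq> {}" using cvec_subspace_zero[OF S(2)] by blast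
  ultimately obtain m K where "\<exists>y0\<in>S. \<forall>y\<in>S. \<nu> K (y - y0) < 1 \<longrightarrow> y \<in> A m"
    using closed_cover_contains_nu_ball[OF S(1) _ _ cover] by blast
  then obtain y0 where y0: "y0 \<in> S" and ball: "\<And>y. y \<in> S \<Longrightarrow> \<nu> K (y - y0) < 1 \<Longrightarrow> y \<in> A m"
    by blast
  have small: "\<nu> k (L i w) \<le> 2 * real m" if w: "w \<in> S" "\<nu> K w < 1" for w i
  proof -
    have X: "y0 + w \<in> X" "y0 \<in> X" "w \<in> X" using y0 w(1) SX cvec_subspace_add[OF S(2)] by blast+
    have "y0 + w \<in> A m" using ball[OF cvec_subspace_add[OF S(2) y0 w(1)]] w(2) by simp
    then have "\<nu> k (L i (y0 + w)) \<le> real m" by (simp add: A_def)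
    moreover have "y0 \<in> A m" using ball[OF y0] by simp
    then have "\<nu> k (L i y0) \<le> real m" by (simp add: A_def)
    moreover have "L i (y0 + w) - L i y0 = L i w" using L_diff[OF X(1,2)] by simp
    moreover have "\<nu> k (L i (y0 + w) - L i y0) \<le> \<nu> k (L i (y0 + w)) + \<nu> k (L i y0)"
      by (rule nu_diff_le[OF L_X[OF X(1)] L_X[OF X(2)]])
    ultimately show ?thesis by simp
  qed
  have "\<nu> k (L i w) \<le> 2 * (2 * real m) * \<nu> K w" if w: "w \<in> S" for w i
  proof (rule homogeneous_bound)
    show "0 \<le> \<nu> K w" using nu_nonneg w SX by blast
    fix t :: real assume t: "t > 0" "t * \<nu> K w < 1"
    have tw: "seq_rscale t w \<in> S" by (rule cvec_subspace_scale[OF S(2) w])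
    have "\<nu> K (seq_rscale t w) = t * \<nu> K w" using nu_scale w SX t(1) by auto
    then have "\<nu> k (L i (seq_rscale t w)) \<le> 2 * real m" using small[OF tw] t(2) by simp
    moreover have "\<nu> k (L i (seq_rscale t w)) = t * \<nu> k (L i w)"
      using L_scale nu_scale L_X w SX t(1) by auto
    ultimately show "t * \<nu> k (L i w) \<le> 2 * real m" by simp
  qed simp
  then show ?thesis by blast
qed

end

end

lemma sum_delta: "finite F \<Longrightarrow> (\<Sum>j\<in>F. c j * delta j i) = (if i \<in> F then c i else 0)"
  by (simp add: delta_def if_distrib[of "(*) _"] sum.delta' cong: if_cong)

lemma phi_iff: "x \<in> phi \<longleftrightarrow> (\<exists>m. \<forall>i\<ge>m. x i = 0)"
proof
  assume "x \<in> phi"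
  then obtain F c where F: "finite F" "x = (\<lambda>i. \<Sum>j\<in>F. c j * delta j i)" unfolding phi_def by blast
  obtain m where "F \<subseteq> {..<m}" using finite_nat_bounded[OF F(1)] by blast
  then have "\<forall>i\<ge>m. x i = 0" using F by (auto simp: sum_delta)
  then show "\<exists>m. \<forall>i\<ge>m. x i = 0" by blast
next
  assume "\<exists>m. \<forall>i\<ge>m. x i = 0"
  then obtain m where m: "\<And>i. i \<ge> m \<Longrightarrow> x i = 0" by blast
  have "x = (\<lambda>i. \<Sum>j\<in>{..<m}. x j * delta j i)"
    using m by (auto simp: sum_delta fun_eq_iff not_less)
  then show "x \<in> phi" unfolding phi_def by blast
qed

lemma delta_in_phi: "delta j \<in> phi"
  unfolding phi_iff by (auto simp: delta_def intro!: exI[of _ "Suc j"])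

lemma cvec_subspace_phi: "cvec_subspace phi"
  unfolding cvec_subspace_def seq_add_eq seq_zero_eq
proof (intro conjI ballI allI)
  fix x y assume "x \<in> phi" "y \<in> phi"
  then obtain m1 m2 where "\<forall>i\<ge>m1. x i = 0" "\<forall>i\<ge>m2. y i = 0" unfolding phi_iff by blast
  then have "\<forall>i\<ge>max m1 m2. (x + y) i = 0" by simp
  then show "x + y \<in> phi" unfolding phi_iff by blast
next
  fix c x assume "x \<in> phi"
  then obtain m where "\<forall>i\<ge>m. x i = 0" unfolding phi_iff by blast
  then have "\<forall>i\<ge>m. seq_scale c x i = 0" by (simp add: seq_scale_apply)
  then show "seq_scale c x \<in> phi" unfolding phi_iff by blast
qed (simp add: phi_iff)

lemma eq_sum_delta:
  assumes "\<And>i. i \<ge> m \<Longrightarrow> z i = 0"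
  shows "z = (\<Sum>i<m. seq_scale (z i) (delta i))"
proof
  fix j
  have "(\<Sum>i<m. seq_scale (z i) (delta i)) j = (\<Sum>i<m. z i * delta i j)"
    by (induction m) (simp_all add: seq_scale_apply)
  then show "z j = (\<Sum>i<m. seq_scale (z i) (delta i)) j"
    using assms[of j] by (simp add: sum_delta not_less)
qed

definition Tmean_weight :: "(nat \<Rightarrow> nat) \<Rightarrow> (nat \<Rightarrow> nat) \<Rightarrow> nat \<Rightarrow> nat \<Rightarrow> real" where
  "Tmean_weight p q n i = real (card {k\<in>{p n<..q n}. i < k}) / real (q n - p n)"

lemma Tmean_eq: "Tmean p q n x = (\<lambda>i. complex_of_real (Tmean_weight p q n i) * x i)"
proof
  fix i
  have "(\<Sum>k\<in>{p n<..q n}. sect k x i) = (\<Sum>k\<in>{p n<..q n}. if i < k then x i else 0)"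
    by (simp add: sect_def sum_delta)
  also have "\<dots> = (\<Sum>k\<in>{k\<in>{p n<..q n}. i < k}. x i)" by (rule sum.inter_filter[symmetric]) simp
  finally show "Tmean p q n x i = complex_of_real (Tmean_weight p q n i) * x i"
    by (simp add: Tmean_def Tmean_weight_def)
qed

lemma Tmean_add: "Tmean p q n (x + y) = Tmean p q n x + Tmean p q n y"
  and Tmean_scale: "Tmean p q n (seq_scale c x) = seq_scale c (Tmean p q n x)"
  and Tmean_diff: "Tmean p q n (x - y) = Tmean p q n x - Tmean p q n y"
  by (simp_all add: Tmean_eq fun_eq_iff seq_scale_apply algebra_simps)

lemma Tmean_weight_eq_0: "q n \<le> i \<Longrightarrow> Tmean_weight p q n i = 0"
  by (simp add: Tmean_weight_def)

lemma Tmean_in_phi: "Tmean p q n x \<in> phi"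
  unfolding phi_iff Tmean_eq by (intro exI[of _ "q n"]) (simp add: Tmean_weight_eq_0)

context
  fixes p q :: "nat \<Rightarrow> nat"
  assumes p_less_q: "\<And>n. p n < q n"
begin

lemma Tmean_weight_nonneg: "0 \<le> Tmean_weight p q n i"
  by (simp add: Tmean_weight_def)

lemma Tmean_weight_le_one: "Tmean_weight p q n i \<le> 1"
proof -
  have "card {k\<in>{p n<..q n}. i < k} \<le> card {p n<..q n}" by (rule card_mono) auto
  then show ?thesis using p_less_q[of n] by (simp add: Tmean_weight_def)
qed

lemma one_minus_Tmean_weight_le:
  assumes "i < q n"
  shows "1 - Tmean_weight p q n i \<le> real i / real (q n - i)"
proof -
  have "{k\<in>{p n<..q n}. i < k} = {max (p n) i<..q n}" by auto
  then have w: "Tmean_weight p q n i = real (q n - max (p n) i) / real (q n - p n)"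
    by (simp add: Tmean_weight_def)
  have pq: "real (q n - p n) > 0" using p_less_q[of n] by simp
  show ?thesis
  proof (cases "i \<le> p n")
    case False
    then have "1 - Tmean_weight p q n i = (real i - real (p n)) / real (q n - p n)"
      using w pq assms p_less_q[of n] by (simp add: field_simps of_nat_diff max_def)
    also have "\<dots> \<le> real i / real (q n - p n)" using pq by (simp add: divide_right_mono)
    also have "\<dots> \<le> real i / real (q n - i)"
      using False assms by (intro divide_left_mono) (auto simp: of_nat_diff)
    finally show ?thesis .
  qed (use w pq in simp)
qed

lemma Tmean_weight_tendsto_one:
  assumes q: "filterlim q at_top sequentially"
  shows "(\<lambda>n. Tmean_weight p q n i) \<longlonglongrightarrow> 1"
proof (rule tendsto_sandwich[of "\<lambda>n. 1 - real i / real (q n - i)" _ _ "\<lambda>n. 1"])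
  have "\<forall>\<^sub>F n in sequentially. Suc i \<le> q n" using q by (simp add: filterlim_at_top)
  then have "\<forall>\<^sub>F n in sequentially. i < q n" by (rule eventually_mono) simp
  then show "\<forall>\<^sub>F n in sequentially. 1 - real i / real (q n - i) \<le> Tmean_weight p q n i"
    by eventually_elim (use one_minus_Tmean_weight_le in force)
  show "\<forall>\<^sub>F n in sequentially. Tmean_weight p q n i \<le> 1" using Tmean_weight_le_one by simp
  have "filterlim (\<lambda>n. real (q n - i)) at_top sequentially"
    using filterlim_compose[OF filterlim_real_sequentially
        filterlim_compose[OF filterlim_minus_const_nat_at_top q]] by (simp add: o_def)
  then have "(\<lambda>n. real i / real (q n - i)) \<longlonglongrightarrow> 0"
    by (intro tendsto_divide_0[OF tendsto_const] filterlim_at_top_imp_at_infinity)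
  then show "(\<lambda>n. 1 - real i / real (q n - i)) \<longlonglongrightarrow> 1"
    using tendsto_diff[OF tendsto_const[of 1]] by fastforce
qed simp

end

locale FK_means = FK_seminorms +
  fixes p q :: "nat \<Rightarrow> nat"
  assumes phi_subset: "phi \<subseteq> X" and p_less_q: "\<And>n. p n < q n"
    and q_tendsto: "filterlim q at_top sequentially"
begin

lemma Tmean_in_X: "Tmean p q n x \<in> X"
  using Tmean_in_phi phi_subset by blast

lemma delta_in_X: "delta i \<in> X"
  using delta_in_phi phi_subset by blast

lemma closure_phi_subspace: "cvec_subspace (T closure_of phi)"
  by (rule cvec_subspace_closure_of[OF cvec_subspace_phi phi_subset])

lemma phi_subset_closure: "phi \<subseteq> T closure_of phi"
  using closure_of_subset[of phi T] phi_subset by simp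

lemma Tmean_nu_bound: "\<exists>K C. \<forall>x\<in>X. \<nu> k (Tmean p q n x) \<le> C * \<nu> K x"
proof -
  obtain \<kappa> where \<kappa>: "\<And>i z. z \<in> X \<Longrightarrow> cmod (z i) \<le> \<nu> (\<kappa> i) z"
    using coordinate_le_nu by metis
  define K where "K = (\<Sum>i<q n. \<kappa> i)"
  have "\<nu> k (Tmean p q n x) \<le> (\<Sum>i<q n. \<nu> k (delta i)) * \<nu> K x" if x: "x \<in> X" for x
  proof -
    have "Tmean p q n x = (\<Sum>i<q n. seq_scale (Tmean p q n x i) (delta i))"
      by (rule eq_sum_delta) (simp add: Tmean_eq Tmean_weight_eq_0)
    moreover have "\<nu> k (\<Sum>i<q n. seq_scale (Tmean p q n x i) (delta i))
        \<le> (\<Sum>i<q n. \<nu> k (seq_scale (Tmean p q n x i) (delta i)))"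
      by (rule nu_sum) (intro cvec_subspace_scale[OF subspace] delta_in_X)
    ultimately have "\<nu> k (Tmean p q n x) \<le> (\<Sum>i<q n. cmod (Tmean p q n x i) * \<nu> k (delta i))"
      by (simp add: nu_scale[OF delta_in_X])
    also have "\<dots> \<le> (\<Sum>i<q n. \<nu> K x * \<nu> k (delta i))"
    proof (rule sum_mono)
      fix i assume i: "i \<in> {..<q n}"
      have "cmod (Tmean p q n x i) = Tmean_weight p q n i * cmod (x i)"
        by (simp add: Tmean_eq norm_mult Tmean_weight_nonneg[OF p_less_q])
      also have "\<dots> \<le> cmod (x i)"
        using Tmean_weight_le_one[OF p_less_q] Tmean_weight_nonneg[OF p_less_q]
        by (simp add: mult_left_le_one_le)
      also have "\<dots> \<le> \<nu> (\<kappa> i) x" by (rule \<kappa>[OF x])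
      also have "\<dots> \<le> \<nu> K x" unfolding K_def using i x by (intro nu_mono member_le_sum) auto
      finally show "cmod (Tmean p q n x i) * \<nu> k (delta i) \<le> \<nu> K x * \<nu> k (delta i)"
        using nu_nonneg[OF delta_in_X] by (intro mult_right_mono) auto
    qed
    also have "\<dots> = (\<Sum>i<q n. \<nu> k (delta i)) * \<nu> K x"
      by (simp add: sum_distrib_left mult.commute)
    finally show ?thesis .
  qed
  then show ?thesis by blast
qed

lemma phi_subset_DS: "phi \<subseteq> DS p q X T"
proof
  fix x assume x: "x \<in> phi"
  then obtain m where m: "\<And>i. i \<ge> m \<Longrightarrow> x i = 0" unfolding phi_iff by blast
  have xX: "x \<in> X" using x phi_subset by blast
  have "\<forall>\<^sub>F n in sequentially. \<nu> k (Tmean p q n x - x) < e" if e: "e > 0" for k e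
  proof -
    define b where "b n = (\<Sum>i<m. cmod (complex_of_real (Tmean_weight p q n i) - 1) * cmod (x i) * \<nu> k (delta i))"
      for n
    have bound: "\<nu> k (Tmean p q n x - x) \<le> b n" for n
    proof -
      have "Tmean p q n x - x = (\<lambda>i. (complex_of_real (Tmean_weight p q n i) - 1) * x i)"
        by (simp add: Tmean_eq fun_eq_iff algebra_simps)
      also have "\<dots> = (\<Sum>i<m. seq_scale ((complex_of_real (Tmean_weight p q n i) - 1) * x i) (delta i))"
        by (rule eq_sum_delta) (simp add: m)
      finally have "\<nu> k (Tmean p q n x - x)
          \<le> (\<Sum>i<m. \<nu> k (seq_scale ((complex_of_real (Tmean_weight p q n i) - 1) * x i) (delta i)))"
        by (simp only:) (rule nu_sum, intro cvec_subspace_scale[OF subspace] delta_in_X)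
      also have "\<dots> = b n" by (simp add: b_def nu_scale[OF delta_in_X] norm_mult)
      finally show ?thesis .
    qed
    have "b \<longlonglongrightarrow> (\<Sum>i<m. cmod (complex_of_real 1 - 1) * cmod (x i) * \<nu> k (delta i))"
      unfolding b_def
      by (intro tendsto_intros tendsto_of_real Tmean_weight_tendsto_one[OF p_less_q q_tendsto])
    then have "\<forall>\<^sub>F n in sequentially. b n < e" using e by (simp add: order_tendstoD)
    then show ?thesis by (rule eventually_mono) (rule le_less_trans[OF bound])
  qed
  then have "limitin T (\<lambda>n. Tmean p q n x) x sequentially"
    using limitin_iff_nu[of "\<lambda>n. Tmean p q n x" x] Tmean_in_X xX by blast
  then show "x \<in> DS p q X T" using xX by (simp add: DS_def)
qed

lemma DS_subset_closure_phi: "DS p q X T \<subseteq> T closure_of phi"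
proof
  fix x assume "x \<in> DS p q X T"
  then have "limitin T (\<lambda>n. Tmean p q n x) x sequentially" by (simp add: DS_def)
  moreover have "\<forall>\<^sub>F n in sequentially. Tmean p q n x \<in> T closure_of phi"
    using Tmean_in_phi phi_subset_closure by (simp add: subsetD)
  ultimately show "x \<in> T closure_of phi" by (rule limitin_closedin[OF _ closedin_closure_of]) simp
qed

lemma DS_subset_DW: "DS p q X T \<subseteq> DW p q X T"
proof
  fix x assume "x \<in> DS p q X T"
  then have x: "x \<in> X" and lim: "limitin T (\<lambda>n. Tmean p q n x) x sequentially" by (auto simp: DS_def)
  have "(\<lambda>n. f (Tmean p q n x)) \<longlonglongrightarrow> f x" if "f \<in> cdual X T" for f
    using continuous_map_limit[OF _ lim, of euclidean f] that by (simp add: cdual_iff o_def)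
  then show "x \<in> DW p q X T" using x by (simp add: DW_def)
qed

lemma DW_subset_DF: "DW p q X T \<subseteq> DF p q X T"
  unfolding DW_def DF_def by (auto intro: convergentI)

lemma DF_subset_DB: "DF p q X T \<subseteq> DB p q X T"
proof -
  have "\<exists>M. \<forall>n. cmod (s n) \<le> M" if "convergent s" for s :: "nat \<Rightarrow> complex"
    using convergent_imp_Bseq[OF that] unfolding Bseq_def by blast
  then show ?thesis unfolding DF_def DB_def by (simp add: Collect_mono_iff)
qed

lemma DW_subset_closure_phi: "DW p q X T \<subseteq> T closure_of phi"
proof
  fix x assume x: "x \<in> DW p q X T"
  show "x \<in> T closure_of phi"
  proof (rule ccontr)
    assume "x \<notin> T closure_of phi"
    then obtain F where F: "F \<in> cdual X T" "\<And>y. y \<in> T closure_of phi \<Longrightarrow> F y = 0" "F x = 1"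
      using exists_cdual_vanishing_on_closed_subspace[OF closedin_closure_of closure_phi_subspace] x
      by (auto simp: DW_def)
    have "(\<lambda>n. F (Tmean p q n x)) \<longlonglongrightarrow> F x" using x F(1) by (simp add: DW_def)
    moreover have "(\<lambda>n. F (Tmean p q n x)) = (\<lambda>n. 0)"
      using F(2) Tmean_in_phi phi_subset_closure by blast
    ultimately have "F x = 0" by (simp add: LIMSEQ_const_iff)
    then show False using F(3) by simp
  qed
qed

end

lemma (in FK_seminorms) limitin_on_closure_if_equicontinuous:
  fixes L :: "nat \<Rightarrow> cseq \<Rightarrow> cseq"
  assumes S: "cvec_subspace S" "S \<subseteq> X"
    and L_X: "\<And>n x. x \<in> X \<Longrightarrow> L n x \<in> X"
    and L_diff: "\<And>n x y. L n (x - y) = L n x - L n y"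
    and equicontinuous: "\<And>k. \<exists>K C. \<forall>w\<in>T closure_of S. \<forall>n. \<nu> k (L n w) \<le> C * \<nu> K w"
    and converges: "\<And>z. z \<in> S \<Longrightarrow> limitin T (\<lambda>n. L n z) z sequentially"
    and y: "y \<in> T closure_of S"
  shows "limitin T (\<lambda>n. L n y) y sequentially"
proof -
  have yX: "y \<in> X" using y closure_of_subset_topspace[of T S] by auto
  have "\<forall>\<^sub>F n in sequentially. \<nu> k (L n y - y) < e" if e: "e > 0" for k e
  proof -
    obtain K C where C: "\<And>w n. w \<in> T closure_of S \<Longrightarrow> \<nu> k (L n w) \<le> C * \<nu> K w"
      using equicontinuous[of k] by blast
    define d where "d = e / (3 * (\<bar>C\<bar> + 1))"
    have d: "d > 0" "\<bar>C\<bar> * d \<le> e / 3" "d \<le> e / 3" using e by (simp_all add: d_def field_simps)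
    obtain z where z: "z \<in> S" "\<nu> (max K k) (z - y) < d"
      using y d(1) in_closure_of_iff_nu[OF S(2)] by blast
    have zX: "z \<in> X" using z(1) S(2) by blast
    have yz: "y - z \<in> T closure_of S"
      using cvec_subspace_diff[OF cvec_subspace_closure_of[OF S] y] z(1) closure_of_subset[of S T] S(2)
      by auto
    have yzX: "y - z \<in> X" by (rule cvec_subspace_diff[OF subspace yX zX])
    have zy: "z - y \<in> X" by (rule cvec_subspace_diff[OF subspace zX yX])
    have "\<nu> K (z - y) \<le> \<nu> (max K k) (z - y)" "\<nu> k (z - y) \<le> \<nu> (max K k) (z - y)"
      by (rule nu_mono[OF _ zy], simp)+
    then have small: "\<nu> K (y - z) < d" "\<nu> k (z - y) < d"
      using z(2) nu_diff_commute[OF yX zX, of K] by linarith+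
    have "\<forall>k e. e > 0 \<longrightarrow> (\<forall>\<^sub>F n in sequentially. \<nu> k (L n z - z) < e)"
      using converges[OF z(1)] limitin_iff_nu[of "\<lambda>n. L n z" z] L_X zX by blast
    moreover have "e / 3 > 0" using e by simp
    ultimately have "\<forall>\<^sub>F n in sequentially. \<nu> k (L n z - z) < e / 3" by blast
    then show ?thesis
    proof (rule eventually_mono)
      fix n assume close: "\<nu> k (L n z - z) < e / 3"
      have Lz: "L n z - z \<in> X" by (rule cvec_subspace_diff[OF subspace L_X[OF zX] zX])
      have split: "L n y - y = L n (y - z) + ((L n z - z) + (z - y))"
        by (simp add: L_diff)
      have "\<nu> k (L n y - y) \<le> \<nu> k (L n (y - z)) + \<nu> k ((L n z - z) + (z - y))"
        unfolding split by (rule nu_add[OF L_X[OF yzX] cvec_subspace_add[OF subspace Lz zy]])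
      moreover have "\<nu> k ((L n z - z) + (z - y)) \<le> \<nu> k (L n z - z) + \<nu> k (z - y)"
        by (rule nu_add[OF Lz zy])
      moreover have "\<nu> k (L n (y - z)) \<le> \<bar>C\<bar> * \<nu> K (y - z)"
        using C[OF yz, of n] mult_right_mono[OF abs_ge_self nu_nonneg[OF yzX]] by (rule order_trans)
      moreover have "\<bar>C\<bar> * \<nu> K (y - z) \<le> \<bar>C\<bar> * d" using small(1) by (intro mult_left_mono) auto
      ultimately show "\<nu> k (L n y - y) < e" using close small(2) d by linarith
    qed
  qed
  then show ?thesis using limitin_iff_nu[of "\<lambda>n. L n y" y] L_X yX by blast
qed

context FK_means
begin

lemma Tmean_equicontinuous_on_closure_phi:
  assumes "T closure_of phi \<subseteq> DB p q X T"
  shows "\<exists>K C. \<forall>y\<in>T closure_of phi. \<forall>n. \<nu> k (Tmean p q n y) \<le> C * \<nu> K y"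
proof (rule uniform_boundedness[of "Tmean p q"])
  show "closedin T (T closure_of phi)" "cvec_subspace (T closure_of phi)"
    by (simp_all add: closure_phi_subspace)
  fix y assume "y \<in> T closure_of phi"
  then have "\<exists>M. \<forall>n. cmod (f (Tmean p q n y)) \<le> M" if "f \<in> cdual X T" for f
    using assms that by (auto simp: DB_def)
  then show "\<exists>B. \<forall>n. \<nu> k (Tmean p q n y) \<le> B"
    by (rule weakly_bounded_imp_bounded[OF Tmean_in_X])
qed (simp_all add: Tmean_in_X Tmean_add Tmean_scale Tmean_nu_bound)

lemma closure_phi_subset_DS:
  assumes "T closure_of phi \<subseteq> DB p q X T"
  shows "T closure_of phi \<subseteq> DS p q X T"
proof
  fix y assume y: "y \<in> T closure_of phi"
  have "limitin T (\<lambda>n. Tmean p q n y) y sequentially"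
  proof (rule limitin_on_closure_if_equicontinuous[OF cvec_subspace_phi phi_subset Tmean_in_X Tmean_diff _ _ y])
    show "\<exists>K C. \<forall>w\<in>T closure_of phi. \<forall>n. \<nu> k (Tmean p q n w) \<le> C * \<nu> K w" for k
      by (rule Tmean_equicontinuous_on_closure_phi[OF assms])
    show "limitin T (\<lambda>n. Tmean p q n z) z sequentially" if "z \<in> phi" for z
      using phi_subset_DS that by (auto simp: DS_def)
  qed
  then show "y \<in> DS p q X T" using y closure_of_subset_topspace[of T phi] by (auto simp: DS_def)
qed

theorem closure_phi_equivalences:
  "(closedin T (DW p q X T) \<longleftrightarrow> T closure_of phi \<subseteq> DB p q X T) \<and>
   (T closure_of phi \<subseteq> DB p q X T \<longleftrightarrow> T closure_of phi \<subseteq> DF p q X T) \<and>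
   (T closure_of phi \<subseteq> DF p q X T \<longleftrightarrow> T closure_of phi = DW p q X T) \<and>
   (T closure_of phi = DW p q X T \<longleftrightarrow> T closure_of phi = DS p q X T) \<and>
   (T closure_of phi = DS p q X T \<longleftrightarrow> closedin T (DS p q X T))"
proof -
  have DS_DB: "DS p q X T \<subseteq> DB p q X T" and DW_DB: "DW p q X T \<subseteq> DB p q X T"
    using DS_subset_DW DW_subset_DF DF_subset_DB by (meson order_trans)+
  have phi_DW: "phi \<subseteq> DW p q X T" using phi_subset_DS DS_subset_DW by (rule order_trans)
  have closed_DW: "T closure_of phi \<subseteq> DW p q X T" if "closedin T (DW p q X T)"
    by (rule closure_of_minimal[OF phi_DW that])
  have closed_DS: "T closure_of phi \<subseteq> DS p q X T" if "closedin T (DS p q X T)"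
    by (rule closure_of_minimal[OF phi_subset_DS that])
  have DB_DS: "T closure_of phi = DS p q X T" if "T closure_of phi \<subseteq> DB p q X T"
    using closure_phi_subset_DS[OF that] DS_subset_closure_phi by (rule subset_antisym)
  have DB_DW: "T closure_of phi = DW p q X T" if "T closure_of phi \<subseteq> DB p q X T"
    using DB_DS[OF that] DS_subset_DW DW_subset_closure_phi by (metis subset_antisym)
  have closed_closure: "closedin T (T closure_of phi)" by (rule closedin_closure_of)
  show ?thesis
  proof (intro conjI iffI)
    assume "closedin T (DW p q X T)"
    then show "T closure_of phi \<subseteq> DB p q X T" using closed_DW DW_DB by blast
  next
    assume "T closure_of phi \<subseteq> DB p q X T"
    then show "closedin T (DW p q X T)" using DB_DW closed_closure by simp
  next
    assume "T closure_of phi \<subseteq> DB p q X T"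
    then show "T closure_of phi \<subseteq> DF p q X T" using DB_DW DW_subset_DF by blast
  next
    assume "T closure_of phi \<subseteq> DF p q X T"
    then show "T closure_of phi \<subseteq> DB p q X T" using DF_subset_DB by blast
  next
    assume "T closure_of phi \<subseteq> DF p q X T"
    then show "T closure_of phi = DW p q X T" using DB_DW DF_subset_DB by blast
  next
    assume "T closure_of phi = DW p q X T"
    then show "T closure_of phi \<subseteq> DF p q X T" using DW_subset_DF by blast
  next
    assume "T closure_of phi = DW p q X T"
    then show "T closure_of phi = DS p q X T" using DB_DS DW_DB by blast
  next
    assume "T closure_of phi = DS p q X T"
    then show "T closure_of phi = DW p q X T" using DB_DW DS_DB by blast
  next
    assume "T closure_of phi = DS p q X T"
    then show "closedin T (DS p q X T)" using closed_closure by simp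
  next
    assume "closedin T (DS p q X T)"
    then show "T closure_of phi = DS p q X T" using closed_DS DS_subset_closure_phi by blast
  qed
qed

end

theorem mainTheorem16:
  fixes X :: "cseq set" and T :: "cseq topology" and p q :: "nat \<Rightarrow> nat"
  assumes fk: "fk_space X T"
    and phiX: "phi \<subseteq> X"
    and pq: "\<And>n. p n < q n"
    and qinf: "filterlim q at_top sequentially"
  shows "(closedin T (DW p q X T) \<longleftrightarrow> T closure_of phi \<subseteq> DB p q X T) \<and>
         (T closure_of phi \<subseteq> DB p q X T \<longleftrightarrow> T closure_of phi \<subseteq> DF p q X T) \<and>
         (T closure_of phi \<subseteq> DF p q X T \<longleftrightarrow> T closure_of phi = DW p q X T) \<and>
         (T closure_of phi = DW p q X T \<longleftrightarrow> T closure_of phi = DS p q X T) \<and>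
         (T closure_of phi = DS p q X T \<longleftrightarrow> closedin T (DS p q X T))"
proof -
  interpret FK_space X T by (rule FK_space.intro[OF fk])
  obtain \<nu> where "FK_seminorms X T \<nu>" by (rule ex_FK_seminorms)
  then interpret FK_means X T \<nu> p q
    using phiX pq qinf by (simp add: FK_means_def FK_means_axioms_def)
  show ?thesis by (rule closure_phi_equivalences)
qed

end
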